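(* Let $L$ be a linear continuum with endpoints. For tuples $\bar f=(f_1,\dots,f_n)$ and $\bar g=(g_1,\dots,g_n)$ in $M_L$, let $\hat f=\frac{1}{n}\sum_{i=1}^n f_i$ and $\hat g=\frac{1}{n}\sum_{i=1}^n g_i$ (pointwise averages). Then $\mathrm{tp}(\bar f,\bar g)$ is determined by $\mathrm{tp}(\bar f)$, $\mathrm{tp}(\bar g)$ and $\mathrm{tp}(\hat f,\hat g)$: if $\bar f',\bar g'$ are $n$-tuples in $M_L$ with $\mathrm{tp}(\bar f')=\mathrm{tp}(\bar f)$, $\mathrm{tp}(\bar g')=\mathrm{tp}(\bar g)$ and $\mathrm{tp}(\hat f',\hat g')=\mathrm{tp}(\hat f,\hat g)$, then $\mathrm{tp}(\bar f',\bar g')=\mathrm{tp}(\bar f,\bar g)$.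
   Context: A linear continuum is a dense linear order with the least upper bound property; with endpoints means it has a least and greatest element. $M_L$ is the set of functions $f:L\to[0,1]$ that are nondecreasing, continuous in the order topology, with $\inf f=0$ and $\sup f=1$, with the sup metric, regarded as a metric structure in the language of binary predicates $\varphi_\alpha$ ($\alpha\in\mathbb{Q}\cap[0,1]$), where $\varphi_\alpha(f,g)=f(t)$ for any $t\in L$ with $f(t)+g(t)=\alpha$. Types are over $\emptyset$. (The pointwise average of elements of $M_L$ is again in $M_L$.) *)

theory Defs
  imports "HOL-Analysis.Analysis"
begin

text \<open>L is modelled as a type of class linear_continuum_topology (dense, conditionally
complete linear order with at least two points, carrying the order topology) which in
addition has a least element (order_bot) and a greatest element (order_top).\<close>

definition M_L :: "('a::{linear_continuum_topology,order_bot,order_top} \<Rightarrow> real) set" where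
  "M_L = {f. mono f \<and> continuous_on UNIV f \<and> (\<forall>t. f t \<in> {0..1})
            \<and> (INF t. f t) = 0 \<and> (SUP t. f t) = 1}"

definition phi :: "real \<Rightarrow> ('a \<Rightarrow> real) \<Rightarrow> ('a \<Rightarrow> real) \<Rightarrow> real" where
  "phi \<alpha> f g = (THE y. \<exists>t. f t + g t = \<alpha> \<and> y = f t)"

definition supdist :: "('a \<Rightarrow> real) \<Rightarrow> ('a \<Rightarrow> real) \<Rightarrow> real" where
  "supdist f g = (SUP t. \<bar>f t - g t\<bar>)"

text \<open>A connective applied to a list of k formulas is a function on nat \<Rightarrow> real whose
arguments beyond k are set to 0.\<close>
datatype fml =
    Pred rat nat nat
  | Dist nat nat
  | Conn "(nat \<Rightarrow> real) \<Rightarrow> real" "fml list"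
  | FSup nat fml
  | FInf nat fml

definition cube :: "(nat \<Rightarrow> real) set" where
  "cube = {v. \<forall>i. v i \<in> {0..1}}"

fun wf :: "fml \<Rightarrow> bool" where
  "wf (Pred \<alpha> i j) = (0 \<le> \<alpha> \<and> \<alpha> \<le> 1)"
| "wf (Dist i j) = True"
| "wf (Conn u ps) = (continuous_on cube u \<and> (\<forall>v\<in>cube. u v \<in> {0..1}) \<and> (\<forall>p\<in>set ps. wf p))"
| "wf (FSup x p) = wf p"
| "wf (FInf x p) = wf p"

fun fv :: "fml \<Rightarrow> nat set" where
  "fv (Pred \<alpha> i j) = {i, j}"
| "fv (Dist i j) = {i, j}"
| "fv (Conn u ps) = (\<Union>p\<in>set ps. fv p)"
| "fv (FSup x p) = fv p - {x}"
| "fv (FInf x p) = fv p - {x}"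

fun eval :: "(nat \<Rightarrow> ('a::{linear_continuum_topology,order_bot,order_top} \<Rightarrow> real)) \<Rightarrow> fml \<Rightarrow> real" where
  "eval \<rho> (Pred \<alpha> i j) = phi (of_rat \<alpha>) (\<rho> i) (\<rho> j)"
| "eval \<rho> (Dist i j) = supdist (\<rho> i) (\<rho> j)"
| "eval \<rho> (Conn u ps) =
     (let vs = map (eval \<rho>) ps in u (\<lambda>k. if k < length vs then vs ! k else 0))"
| "eval \<rho> (FSup x p) = (SUP g\<in>M_L. eval (\<rho>(x := g)) p)"
| "eval \<rho> (FInf x p) = (INF g\<in>M_L. eval (\<rho>(x := g)) p)"

definition asg :: "('a \<Rightarrow> real) list \<Rightarrow> nat \<Rightarrow> ('a \<Rightarrow> real)" where
  "asg xs i = (if i < length xs then xs ! i else undefined)"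

text \<open>tp(xs) = tp(ys) (types over the empty set in M_L): same length and every formula
with free variables among the first length xs variables gets the same value.\<close>
definition same_tp :: "('a::{linear_continuum_topology,order_bot,order_top} \<Rightarrow> real) list
    \<Rightarrow> ('a \<Rightarrow> real) list \<Rightarrow> bool" where
  "same_tp xs ys \<longleftrightarrow> length xs = length ys \<and>
     (\<forall>p. wf p \<and> fv p \<subseteq> {..<length xs} \<longrightarrow> eval (asg xs) p = eval (asg ys) p)"

definition avg :: "('a \<Rightarrow> real) list \<Rightarrow> ('a \<Rightarrow> real)" where
  "avg fs = (\<lambda>t. (\<Sum>f\<leftarrow>fs. f t) / real (length fs))"

end

(* Identify an assignment of elements of M_L to finitely many variables with its curve, the set of
   points (f_1 t, ..., f_n t), t in L. As all coordinates are nondecreasing, a point of the curve is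
   determined by its coordinate sum.

   The type of a tuple is exactly its curve. Evaluation of a formula depends only on the curve, by
   induction on formulas: in the quantifier step a witness g for one tuple is transferred to the
   other after perturbing the first tuple uniformly slightly (evaluation is uniformly continuous) so
   that g becomes a function of its coordinate sum. Conversely, for each rational point a there is
   a formula measuring how close the curve passes to a, so tuples of the same type have the same
   curve.

   For the theorem, the point of the curve of (fs, gs) at t is determined by the point
   (avg fs t, avg gs t) of the curve of the averages, since each half is determined by its
   coordinate sum n * avg fs t, resp. n * avg gs t, and the curve of fs, resp. gs. Hence the
   curves of (fs', gs') and (fs, gs) coincide. *)

theory Submission
  imports Defs
begin

section \<open>Nondecreasing continuous maps on L\<close>

definition increasing_onto ::
    "real \<Rightarrow> real \<Rightarrow> ('a::{linear_continuum_topology,order_bot,order_top} \<Rightarrow> real) \<Rightarrow> bool" where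
  "increasing_onto a b \<sigma> \<longleftrightarrow> mono \<sigma> \<and> continuous_on UNIV \<sigma> \<and> \<sigma> bot = a \<and> \<sigma> top = b"

lemma increasing_onto_in_Icc: "increasing_onto a b \<sigma> \<Longrightarrow> \<sigma> t \<in> {a..b}"
  unfolding increasing_onto_def using monoD[of \<sigma> bot t] monoD[of \<sigma> t top] by auto

lemma range_increasing_onto:
  assumes "increasing_onto a b \<sigma>"
  shows "range \<sigma> = {a..b}"
proof
  show "range \<sigma> \<subseteq> {a..b}"
    using increasing_onto_in_Icc[OF assms] by auto
  show "{a..b} \<subseteq> range \<sigma>"
    using IVT'[of \<sigma> bot _ top] assms continuous_on_subset
    unfolding increasing_onto_def by fastforce
qed

lemma increasing_onto_comp:
  assumes "increasing_onto a b \<sigma>" "mono_on {a..b} \<phi>" "continuous_on {a..b} \<phi>"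
  shows "increasing_onto (\<phi> a) (\<phi> b) (\<lambda>t. \<phi> (\<sigma> t))"
  unfolding increasing_onto_def
proof (intro conjI)
  have \<sigma>: "mono \<sigma>" "continuous_on UNIV \<sigma>" "\<sigma> bot = a" "\<sigma> top = b"
    using assms(1) by (auto simp: increasing_onto_def)
  show "mono (\<lambda>t. \<phi> (\<sigma> t))"
    using increasing_onto_in_Icc[OF assms(1)] by (intro monoI mono_onD[OF assms(2)] monoD[OF \<sigma>(1)])
  show "continuous_on UNIV (\<lambda>t. \<phi> (\<sigma> t))"
    by (rule continuous_on_compose2[OF assms(3) \<sigma>(2)]) (use increasing_onto_in_Icc[OF assms(1)] in auto)
qed (use assms(1) in \<open>simp_all add: increasing_onto_def\<close>)

lemma M_L_iff_increasing_onto: "f \<in> M_L \<longleftrightarrow> increasing_onto 0 1 f"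
proof -
  have extremes: "(INF t. f t) = f bot" "(SUP t. f t) = f top" if "mono f"
    using that by (auto intro!: cInf_eq_minimum cSup_eq_maximum simp: mono_def)
  show ?thesis
  proof
    assume "f \<in> M_L"
    then show "increasing_onto 0 1 f"
      using extremes by (auto simp: M_L_def increasing_onto_def)
  next
    assume "increasing_onto 0 1 f"
    then show "f \<in> M_L"
      using extremes increasing_onto_in_Icc[of 0 1 f] by (auto simp: M_L_def increasing_onto_def)
  qed
qed

lemma M_L_D:
  assumes "f \<in> M_L"
  shows "mono f" "continuous_on UNIV f" "0 \<le> f t" "f t \<le> 1" "f bot = 0" "f top = 1"
  using assms increasing_onto_in_Icc[of 0 1 f t]
  by (auto simp: M_L_iff_increasing_onto increasing_onto_def)

lemma mono_sum_abs_diff: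
  fixes f g :: "'a::linorder \<Rightarrow> real"
  assumes "mono f" "mono g"
  shows "\<bar>f t - f s\<bar> \<le> \<bar>(f t + g t) - (f s + g s)\<bar>"
proof (cases "t \<le> s")
  case True
  then show ?thesis using monoD[OF assms(1) True] monoD[OF assms(2) True] by linarith
next
  case False
  then have "s \<le> t" by simp
  then show ?thesis using monoD[OF assms(1) \<open>s \<le> t\<close>] monoD[OF assms(2) \<open>s \<le> t\<close>] by linarith
qed

lemma phi_eq:
  assumes "f \<in> M_L" "g \<in> M_L" "f t + g t = \<alpha>"
  shows "phi \<alpha> f g = f t"
  unfolding phi_def
proof (rule the_equality)
  fix y assume "\<exists>s. f s + g s = \<alpha> \<and> y = f s"
  then obtain s where "f s + g s = \<alpha>" "y = f s" by auto
  then show "y = f t"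
    using mono_sum_abs_diff[OF M_L_D(1)[OF assms(1)] M_L_D(1)[OF assms(2)], of s t] assms(3)
    by simp
qed (use assms in auto)

lemma phi_exists:
  fixes f :: "'a::{linear_continuum_topology,order_bot,order_top} \<Rightarrow> real"
  assumes "f \<in> M_L" "g \<in> M_L" "0 \<le> \<alpha>" "\<alpha> \<le> 2"
  shows "\<exists>t. f t + g t = \<alpha>"
proof -
  have "increasing_onto 0 2 (\<lambda>t. f t + g t)"
    using M_L_D[OF assms(1)] M_L_D[OF assms(2)]
    by (simp add: increasing_onto_def mono_def add_mono continuous_on_add)
  then have "\<alpha> \<in> range (\<lambda>t. f t + g t)"
    using assms(3,4) by (simp add: range_increasing_onto)
  then show ?thesis by auto
qed

lemma phi_in_unit:
  fixes f :: "'a::{linear_continuum_topology,order_bot,order_top} \<Rightarrow> real"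
  assumes "f \<in> M_L" "g \<in> M_L" "0 \<le> \<alpha>" "\<alpha> \<le> 2"
  shows "phi \<alpha> f g \<in> {0..1}"
  using phi_exists[OF assms] phi_eq[OF assms(1,2)] M_L_D[OF assms(1)] by force

lemma supdist_in_unit:
  assumes "f \<in> M_L" "g \<in> M_L"
  shows "supdist f g \<in> {0..1}"
proof -
  have le1: "\<bar>f t - g t\<bar> \<le> 1" for t
    using M_L_D(3,4)[OF assms(1), of t] M_L_D(3,4)[OF assms(2), of t] by auto
  then have "bdd_above (range (\<lambda>t. \<bar>f t - g t\<bar>))"
    by (intro bdd_aboveI2)
  then have "0 \<le> supdist f g"
    unfolding supdist_def by (rule cSUP_upper2[OF _ UNIV_I]) simp
  moreover have "supdist f g \<le> 1"
    unfolding supdist_def by (rule cSUP_least) (use le1 in auto)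
  ultimately show ?thesis by simp
qed

section \<open>Evaluation is uniformly continuous in the assignment\<close>

definition M_L_on :: "nat set \<Rightarrow> (nat \<Rightarrow> 'a::{linear_continuum_topology,order_bot,order_top} \<Rightarrow> real) \<Rightarrow> bool"
  where "M_L_on V \<rho> \<longleftrightarrow> (\<forall>i\<in>V. \<rho> i \<in> M_L)"

lemma M_L_on_subset: "V \<subseteq> V' \<Longrightarrow> M_L_on V' \<rho> \<Longrightarrow> M_L_on V \<rho>"
  by (auto simp: M_L_on_def)

lemma M_L_on_upd: "M_L_on V \<rho> \<Longrightarrow> g \<in> M_L \<Longrightarrow> M_L_on (insert x V) (\<rho>(x := g))"
  by (auto simp: M_L_on_def)

lemma M_L_on_upd_Diff: "M_L_on (V - {x}) \<rho> \<Longrightarrow> g \<in> M_L \<Longrightarrow> M_L_on V (\<rho>(x := g))"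
  by (auto simp: M_L_on_def)

definition padded :: "real list \<Rightarrow> nat \<Rightarrow> real" where
  "padded vs = (\<lambda>k. if k < length vs then vs ! k else 0)"

lemma eval_Conn: "eval \<rho> (Conn u ps) = u (padded (map (eval \<rho>) ps))"
  by (simp add: padded_def Let_def)

lemma padded_in_cube: "(\<And>x. x \<in> set vs \<Longrightarrow> x \<in> {0..1}) \<Longrightarrow> padded vs \<in> cube"
  by (auto simp: padded_def cube_def)

lemma of_rat_unit: "a \<in> {0..1} \<Longrightarrow> real_of_rat a \<in> {0..1}"
  by (metis atLeastAtMost_iff of_rat_0 of_rat_1 of_rat_less_eq)

lemma wf_Pred_bounds:
  assumes "wf (Pred \<alpha> i j)"
  shows "0 \<le> real_of_rat \<alpha>" "real_of_rat \<alpha> \<le> 2"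
  using assms by (simp_all add: zero_le_of_rat_iff)
    (metis of_rat_1 of_rat_less_eq one_le_numeral order.trans)

lemma SUP_INF_in_unit:
  fixes a :: "'b \<Rightarrow> real"
  assumes "M \<noteq> {}" "\<And>g. g \<in> M \<Longrightarrow> a g \<in> {0..1}"
  shows "(SUP g\<in>M. a g) \<in> {0..1}" "(INF g\<in>M. a g) \<in> {0..1}"
proof -
  obtain g0 where g0: "g0 \<in> M" using assms(1) by auto
  have bdd: "bdd_above (a ` M)" "bdd_below (a ` M)"
    using assms(2) by (auto intro!: bdd_aboveI[of _ 1] bdd_belowI[of _ 0])
  show "(SUP g\<in>M. a g) \<in> {0..1}"
    using cSUP_upper2[OF bdd(1) g0, of 0] cSUP_least[OF assms(1), of a 1] assms(2) g0 by auto
  show "(INF g\<in>M. a g) \<in> {0..1}"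
    using cINF_lower2[OF bdd(2) g0, of 1] cINF_greatest[OF assms(1), of 0 a] assms(2) g0 by auto
qed

lemma eval_in_unit:
  fixes \<rho> :: "nat \<Rightarrow> 'a::{linear_continuum_topology,order_bot,order_top} \<Rightarrow> real"
  assumes "wf p" "M_L_on (fv p) \<rho>" "(M_L :: ('a \<Rightarrow> real) set) \<noteq> {}"
  shows "eval \<rho> p \<in> {0..1}"
  using assms(1,2)
proof (induction p arbitrary: \<rho>)
  case (Pred \<alpha> i j)
  then show ?case
    using Pred.prems(2) phi_in_unit[OF _ _ wf_Pred_bounds[OF Pred(1)], of "\<rho> i" "\<rho> j"]
    by (simp add: M_L_on_def)
next
  case (Dist i j)
  then show ?case using supdist_in_unit by (auto simp: M_L_on_def)
next
  case (Conn u ps)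
  have "padded (map (eval \<rho>) ps) \<in> cube"
    using Conn by (intro padded_in_cube) (auto simp: M_L_on_def)
  then show ?case using Conn.prems(1) unfolding eval_Conn by simp
next
  case (FSup x p)
  have "eval (\<rho>(x := g)) p \<in> {0..1}" if "g \<in> M_L" for g
    using FSup.IH FSup.prems M_L_on_upd_Diff[OF _ that] by simp
  then show ?case using SUP_INF_in_unit(1)[OF assms(3)] by simp
next
  case (FInf x p)
  have "eval (\<rho>(x := g)) p \<in> {0..1}" if "g \<in> M_L" for g
    using FInf.IH FInf.prems M_L_on_upd_Diff[OF _ that] by simp
  then show ?case using SUP_INF_in_unit(2)[OF assms(3)] by simp
qed

lemma cSUP_le_cSUP_add:
  fixes a b :: "'b \<Rightarrow> real"
  assumes "M \<noteq> {}" "bdd_above (b ` M)" "\<And>g. g \<in> M \<Longrightarrow> \<exists>g'\<in>M. a g \<le> b g' + e"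
  shows "(SUP g\<in>M. a g) \<le> (SUP g\<in>M. b g) + e"
proof (rule cSUP_least[OF assms(1)])
  fix g assume "g \<in> M"
  then obtain g' where "g' \<in> M" "a g \<le> b g' + e" using assms(3) by blast
  then show "a g \<le> (SUP g\<in>M. b g) + e" using cSUP_upper[OF _ assms(2), of g'] by linarith
qed

lemma cINF_le_cINF_add:
  fixes a b :: "'b \<Rightarrow> real"
  assumes "M \<noteq> {}" "bdd_below (a ` M)" "\<And>g'. g' \<in> M \<Longrightarrow> \<exists>g\<in>M. a g \<le> b g' + e"
  shows "(INF g\<in>M. a g) \<le> (INF g\<in>M. b g) + e"
proof -
  have "(INF g\<in>M. a g) - e \<le> (INF g\<in>M. b g)"
  proof (rule cINF_greatest[OF assms(1)])
    fix g' assume "g' \<in> M"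
    then obtain g where "g \<in> M" "a g \<le> b g' + e" using assms(3) by blast
    then show "(INF g\<in>M. a g) - e \<le> b g'" using cINF_lower[OF assms(2), of g] by linarith
  qed
  then show ?thesis by linarith
qed

lemma SUP_INF_close:
  fixes a b :: "'b \<Rightarrow> real"
  assumes "M \<noteq> {}" "\<And>g. g \<in> M \<Longrightarrow> a g \<in> {0..1}" "\<And>g. g \<in> M \<Longrightarrow> b g \<in> {0..1}"
    and "\<And>g. g \<in> M \<Longrightarrow> \<exists>g'\<in>M. \<bar>a g - b g'\<bar> \<le> e"
    and "\<And>g'. g' \<in> M \<Longrightarrow> \<exists>g\<in>M. \<bar>a g - b g'\<bar> \<le> e"
  shows "\<bar>(SUP g\<in>M. a g) - (SUP g\<in>M. b g)\<bar> \<le> e" "\<bar>(INF g\<in>M. a g) - (INF g\<in>M. b g)\<bar> \<le> e"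
proof -
  have bdd: "bdd_above (c ` M)" "bdd_below (c ` M)"
    if "\<And>g. g \<in> M \<Longrightarrow> c g \<in> {0..1}" for c :: "'b \<Rightarrow> real"
    using that by (auto intro!: bdd_aboveI[of _ 1] bdd_belowI[of _ 0])
  have ab: "\<exists>g'\<in>M. a g \<le> b g' + e" "\<exists>g'\<in>M. b g' \<le> a g + e"
    and ba: "\<exists>g'\<in>M. b g \<le> a g' + e" "\<exists>g'\<in>M. a g' \<le> b g + e" if "g \<in> M" for g
    using assms(4,5)[OF that] by (force simp: abs_le_iff)+
  have "(SUP g\<in>M. a g) \<le> (SUP g\<in>M. b g) + e"
    using ab(1) by (intro cSUP_le_cSUP_add[OF assms(1) bdd(1)[OF assms(3)]])
  moreover have "(SUP g\<in>M. b g) \<le> (SUP g\<in>M. a g) + e"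
    using ba(1) by (intro cSUP_le_cSUP_add[OF assms(1) bdd(1)[OF assms(2)]])
  ultimately show "\<bar>(SUP g\<in>M. a g) - (SUP g\<in>M. b g)\<bar> \<le> e" by linarith
  have "(INF g\<in>M. a g) \<le> (INF g\<in>M. b g) + e"
    using ba(2) by (intro cINF_le_cINF_add[OF assms(1) bdd(2)[OF assms(2)]])
  moreover have "(INF g\<in>M. b g) \<le> (INF g\<in>M. a g) + e"
    using ab(2) by (intro cINF_le_cINF_add[OF assms(1) bdd(2)[OF assms(3)]])
  ultimately show "\<bar>(INF g\<in>M. a g) - (INF g\<in>M. b g)\<bar> \<le> e" by linarith
qed

lemma phi_dist_le:
  fixes f :: "'a::{linear_continuum_topology,order_bot,order_top} \<Rightarrow> real"
  assumes "f \<in> M_L" "g \<in> M_L" "f' \<in> M_L" "g' \<in> M_L" "0 \<le> \<alpha>" "\<alpha> \<le> 2"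
    and "\<And>t. \<bar>f t - f' t\<bar> \<le> d" "\<And>t. \<bar>g t - g' t\<bar> \<le> d"
  shows "\<bar>phi \<alpha> f g - phi \<alpha> f' g'\<bar> \<le> 3 * d"
proof -
  obtain t where t: "f t + g t = \<alpha>" using phi_exists[OF assms(1,2,5,6)] by auto
  obtain s where s: "f' s + g' s = \<alpha>" using phi_exists[OF assms(3,4,5,6)] by auto
  have "\<bar>f t - f s\<bar> \<le> \<bar>(f t + g t) - (f s + g s)\<bar>"
    by (rule mono_sum_abs_diff[OF M_L_D(1)[OF assms(1)] M_L_D(1)[OF assms(2)]])
  then show ?thesis
    using phi_eq[OF assms(1,2) t] phi_eq[OF assms(3,4) s] t s assms(7)[of s] assms(8)[of s]
    by linarith
qed

lemma supdist_dist_le: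
  fixes f :: "'a::{linear_continuum_topology,order_bot,order_top} \<Rightarrow> real"
  assumes "f \<in> M_L" "g \<in> M_L" "f' \<in> M_L" "g' \<in> M_L"
    and "\<And>t. \<bar>f t - f' t\<bar> \<le> d" "\<And>t. \<bar>g t - g' t\<bar> \<le> d"
  shows "\<bar>supdist f g - supdist f' g'\<bar> \<le> 2 * d"
  unfolding supdist_def
proof (rule SUP_INF_close(1))
  show "\<bar>f t - g t\<bar> \<in> {0..1}" "\<bar>f' t - g' t\<bar> \<in> {0..1}" for t
    using M_L_D(3,4)[OF assms(1), of t] M_L_D(3,4)[OF assms(2), of t]
      M_L_D(3,4)[OF assms(3), of t] M_L_D(3,4)[OF assms(4), of t] by auto
  have "\<bar>\<bar>f t - g t\<bar> - \<bar>f' t - g' t\<bar>\<bar> \<le> 2 * d" for t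
    using assms(5)[of t] assms(6)[of t] by linarith
  then show "\<exists>s\<in>UNIV. \<bar>\<bar>f t - g t\<bar> - \<bar>f' s - g' s\<bar>\<bar> \<le> 2 * d"
    "\<exists>s\<in>UNIV. \<bar>\<bar>f s - g s\<bar> - \<bar>f' t - g' t\<bar>\<bar> \<le> 2 * d" for t
    by blast+
qed simp

lemma dist_fun_le_coordinatewise:
  fixes v w :: "nat \<Rightarrow> real"
  assumes "\<And>k. \<bar>v k - w k\<bar> \<le> d"
  shows "dist v w \<le> 2 * d"
proof -
  have le: "(1/2)^n * min (dist (v (from_nat n)) (w (from_nat n))) 1 \<le> (1/2::real)^n * d" for n
    using assms[of "from_nat n"] by (intro mult_left_mono) (auto simp: dist_real_def)
  have sg: "summable (\<lambda>n. (1/2::real)^n * d)"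
    by (intro summable_mult2) simp
  have "dist v w \<le> (\<Sum>n. (1/2::real)^n * d)"
    unfolding dist_fun_def
    by (rule suminf_le[OF le summable_comparison_test'[OF sg, of 0] sg]) (use le in auto)
  also have "\<dots> = 2 * d"
    using suminf_mult2[of "\<lambda>n. (1/2::real)^n" d] suminf_geometric[of "1/2::real"] by simp
  finally show ?thesis .
qed

lemma compact_cube: "compact cube"
proof -
  have "cube = PiE UNIV (\<lambda>_. {0..1::real})"
    by (auto simp: cube_def PiE_def extensional_def)
  moreover have "compactin (product_topology (\<lambda>i. euclidean) UNIV) (PiE UNIV (\<lambda>_::nat. {0..1::real}))"
    by (subst compactin_PiE) auto
  ultimately show ?thesis unfolding euclidean_product_topology by simp
qed

lemma continuous_on_cube_modulus:
  assumes "continuous_on cube u" "(e::real) > 0"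
  shows "\<exists>d>0. \<forall>v\<in>cube. \<forall>w\<in>cube. (\<forall>k. \<bar>v k - w k\<bar> \<le> d) \<longrightarrow> \<bar>u v - u w\<bar> < e"
proof -
  obtain d where d: "d > 0" "\<And>v w. v \<in> cube \<Longrightarrow> w \<in> cube \<Longrightarrow> dist w v < d \<Longrightarrow> dist (u w) (u v) < e"
    using compact_uniformly_continuous[OF assms(1) compact_cube] assms(2)
    unfolding uniformly_continuous_on_def by metis
  have "\<bar>u v - u w\<bar> < e" if "v \<in> cube" "w \<in> cube" "\<forall>k. \<bar>v k - w k\<bar> \<le> d / 3" for v w
    using d(2)[OF that(2,1)] dist_fun_le_coordinatewise[of v w "d / 3"] that(3) d(1)
    by (simp add: dist_real_def)
  then show ?thesis using d(1) by (intro exI[of _ "d / 3"]) auto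
qed

lemma ex_common_delta:
  fixes P :: "'a \<Rightarrow> real \<Rightarrow> bool"
  assumes "finite A" "\<And>x. x \<in> A \<Longrightarrow> \<exists>d>0. P x d"
    and "\<And>x d d'. P x d \<Longrightarrow> 0 < d' \<Longrightarrow> d' \<le> d \<Longrightarrow> P x d'"
  shows "\<exists>d>0. \<forall>x\<in>A. P x d"
  using assms(1,2)
proof (induction A rule: finite_induct)
  case (insert a A)
  obtain d1 d2 where d: "d1 > 0" "P a d1" "d2 > 0" "\<forall>x\<in>A. P x d2"
    using insert by (metis insert_iff)
  have "P a (min d1 d2)"
    by (rule assms(3)[OF d(2)]) (use d in auto)
  moreover have "P x (min d1 d2)" if "x \<in> A" for x
    by (rule assms(3)[of x d2]) (use d that in auto)
  ultimately show ?case using d by (intro exI[of _ "min d1 d2"]) auto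
qed (auto intro: exI[of _ 1])

definition unif_close :: "nat set \<Rightarrow> real \<Rightarrow> (nat \<Rightarrow> 'a \<Rightarrow> real) \<Rightarrow> (nat \<Rightarrow> 'a \<Rightarrow> real) \<Rightarrow> bool"
  where "unif_close V d \<rho> \<rho>' \<longleftrightarrow> (\<forall>i\<in>V. \<forall>t. \<bar>\<rho> i t - \<rho>' i t\<bar> \<le> d)"

lemma unif_close_mono: "V \<subseteq> V' \<Longrightarrow> d \<le> d' \<Longrightarrow> unif_close V' d \<rho> \<rho>' \<Longrightarrow> unif_close V d' \<rho> \<rho>'"
  unfolding unif_close_def by (meson order_trans subsetD)

lemma unif_close_upd_Diff:
  "0 \<le> d \<Longrightarrow> unif_close (V - {x}) d \<rho> \<rho>' \<Longrightarrow> unif_close V d (\<rho>(x := g)) (\<rho>'(x := g))"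
  by (auto simp: unif_close_def)

lemma eval_quantifier_close:
  fixes \<rho> \<rho>' :: "nat \<Rightarrow> 'a::{linear_continuum_topology,order_bot,order_top} \<Rightarrow> real"
  assumes "wf p" "(M_L :: ('a \<Rightarrow> real) set) \<noteq> {}"
    and "M_L_on (fv p - {x}) \<rho>" "M_L_on (fv p - {x}) \<rho>'"
    and "\<And>g. g \<in> M_L \<Longrightarrow> \<exists>h\<in>M_L. \<bar>eval (\<rho>(x := g)) p - eval (\<rho>'(x := h)) p\<bar> \<le> e"
    and "\<And>h. h \<in> M_L \<Longrightarrow> \<exists>g\<in>M_L. \<bar>eval (\<rho>(x := g)) p - eval (\<rho>'(x := h)) p\<bar> \<le> e"
  shows "\<bar>eval \<rho> (FSup x p) - eval \<rho>' (FSup x p)\<bar> \<le> e"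
    and "\<bar>eval \<rho> (FInf x p) - eval \<rho>' (FInf x p)\<bar> \<le> e"
  using SUP_INF_close[where a = "\<lambda>g. eval (\<rho>(x := g)) p" and b = "\<lambda>g. eval (\<rho>'(x := g)) p",
      OF assms(2) eval_in_unit[OF assms(1) M_L_on_upd_Diff[OF assms(3)] assms(2)]
      eval_in_unit[OF assms(1) M_L_on_upd_Diff[OF assms(4)] assms(2)] assms(5,6)]
  by simp_all

lemma eval_quantifier_modulus:
  fixes \<rho> \<rho>' :: "nat \<Rightarrow> 'a::{linear_continuum_topology,order_bot,order_top} \<Rightarrow> real"
  assumes "wf p" "(M_L :: ('a \<Rightarrow> real) set) \<noteq> {}" "0 \<le> d"
    and modulus: "\<forall>(\<sigma> :: nat \<Rightarrow> 'a \<Rightarrow> real) \<sigma>'. M_L_on (fv p) \<sigma> \<longrightarrow> M_L_on (fv p) \<sigma>' \<longrightarrow>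
      unif_close (fv p) d \<sigma> \<sigma>' \<longrightarrow> \<bar>eval \<sigma> p - eval \<sigma>' p\<bar> \<le> e"
    and \<rho>: "M_L_on (fv p - {x}) \<rho>" "M_L_on (fv p - {x}) \<rho>'" "unif_close (fv p - {x}) d \<rho> \<rho>'"
  shows "\<bar>eval \<rho> (FSup x p) - eval \<rho>' (FSup x p)\<bar> \<le> e"
    and "\<bar>eval \<rho> (FInf x p) - eval \<rho>' (FInf x p)\<bar> \<le> e"
proof -
  have "\<bar>eval (\<rho>(x := g)) p - eval (\<rho>'(x := g)) p\<bar> \<le> e" if "g \<in> M_L" for g
    using modulus M_L_on_upd_Diff[OF \<rho>(1) that] M_L_on_upd_Diff[OF \<rho>(2) that]
      unif_close_upd_Diff[OF assms(3) \<rho>(3)] by blast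
  then show "\<bar>eval \<rho> (FSup x p) - eval \<rho>' (FSup x p)\<bar> \<le> e"
    and "\<bar>eval \<rho> (FInf x p) - eval \<rho>' (FInf x p)\<bar> \<le> e"
    by (intro eval_quantifier_close[OF assms(1,2) \<rho>(1,2)]; blast)+
qed

lemma padded_eval_in_cube:
  fixes \<rho> :: "nat \<Rightarrow> 'a::{linear_continuum_topology,order_bot,order_top} \<Rightarrow> real"
  assumes "\<forall>q\<in>set ps. wf q" "M_L_on (\<Union>q\<in>set ps. fv q) \<rho>" "(M_L :: ('a \<Rightarrow> real) set) \<noteq> {}"
  shows "padded (map (eval \<rho>) ps) \<in> cube"
proof (rule padded_in_cube)
  fix z assume "z \<in> set (map (eval \<rho>) ps)"
  then obtain q where q: "q \<in> set ps" "z = eval \<rho> q" by auto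
  then have "M_L_on (fv q) \<rho>" using assms(2) by (auto intro: M_L_on_subset)
  then show "z \<in> {0..1}" using eval_in_unit[OF _ _ assms(3)] assms(1) q by simp
qed

lemma eval_Conn_modulus:
  fixes ps :: "fml list"
  assumes "wf (Conn u ps)" "(M_L :: ('a::{linear_continuum_topology,order_bot,order_top} \<Rightarrow> real) set) \<noteq> {}"
    and "e > 0"
    and IH: "\<And>q e. q \<in> set ps \<Longrightarrow> e > 0 \<Longrightarrow> \<exists>d>0. \<forall>(\<rho> :: nat \<Rightarrow> 'a \<Rightarrow> real) \<rho>'.
      M_L_on (fv q) \<rho> \<longrightarrow> M_L_on (fv q) \<rho>' \<longrightarrow> unif_close (fv q) d \<rho> \<rho>' \<longrightarrow> \<bar>eval \<rho> q - eval \<rho>' q\<bar> \<le> e"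
  shows "\<exists>d>0. \<forall>(\<rho> :: nat \<Rightarrow> 'a \<Rightarrow> real) \<rho>'. M_L_on (fv (Conn u ps)) \<rho> \<longrightarrow> M_L_on (fv (Conn u ps)) \<rho>' \<longrightarrow>
           unif_close (fv (Conn u ps)) d \<rho> \<rho>' \<longrightarrow> \<bar>eval \<rho> (Conn u ps) - eval \<rho>' (Conn u ps)\<bar> \<le> e"
proof -
  obtain d1 where d1: "d1 > 0" "\<forall>v\<in>cube. \<forall>w\<in>cube. (\<forall>k. \<bar>v k - w k\<bar> \<le> d1) \<longrightarrow> \<bar>u v - u w\<bar> < e"
    using continuous_on_cube_modulus[of u e] assms(1,3) by auto
  have "\<exists>d>0. \<forall>q\<in>set ps. \<forall>(\<rho> :: nat \<Rightarrow> 'a \<Rightarrow> real) \<rho>'. M_L_on (fv q) \<rho> \<longrightarrow>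
      M_L_on (fv q) \<rho>' \<longrightarrow> unif_close (fv q) d \<rho> \<rho>' \<longrightarrow> \<bar>eval \<rho> q - eval \<rho>' q\<bar> \<le> d1"
    by (rule ex_common_delta) (use IH d1(1) unif_close_mono[OF order_refl] in blast)+
  then obtain d where d: "d > 0" "\<forall>q\<in>set ps. \<forall>(\<rho> :: nat \<Rightarrow> 'a \<Rightarrow> real) \<rho>'. M_L_on (fv q) \<rho> \<longrightarrow>
      M_L_on (fv q) \<rho>' \<longrightarrow> unif_close (fv q) d \<rho> \<rho>' \<longrightarrow> \<bar>eval \<rho> q - eval \<rho>' q\<bar> \<le> d1"
    by blast
  have "\<bar>eval \<rho> (Conn u ps) - eval \<rho>' (Conn u ps)\<bar> \<le> e"
    if h: "M_L_on (fv (Conn u ps)) \<rho>" "M_L_on (fv (Conn u ps)) \<rho>'" "unif_close (fv (Conn u ps)) d \<rho> \<rho>'"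
    for \<rho> \<rho>' :: "nat \<Rightarrow> 'a \<Rightarrow> real"
  proof -
    have "\<bar>eval \<rho> q - eval \<rho>' q\<bar> \<le> d1" if "q \<in> set ps" for q
    proof -
      have sub: "fv q \<subseteq> fv (Conn u ps)" using that by auto
      show ?thesis
        using d(2) that M_L_on_subset[OF sub h(1)] M_L_on_subset[OF sub h(2)]
          unif_close_mono[OF sub order_refl h(3)] by blast
    qed
    then have "\<forall>k. \<bar>padded (map (eval \<rho>) ps) k - padded (map (eval \<rho>') ps) k\<bar> \<le> d1"
      using d1(1) by (auto simp: padded_def)
    moreover have "padded (map (eval \<sigma>) ps) \<in> cube" if "M_L_on (fv (Conn u ps)) \<sigma>"
      for \<sigma> :: "nat \<Rightarrow> 'a \<Rightarrow> real"
      using padded_eval_in_cube[OF _ _ assms(2)] assms(1) that by simp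
    ultimately have "\<bar>u (padded (map (eval \<rho>) ps)) - u (padded (map (eval \<rho>') ps))\<bar> < e"
      using d1(2) h(1,2) by blast
    then show ?thesis unfolding eval_Conn by simp
  qed
  then show ?thesis using d(1) by blast
qed

lemma eval_uniformly_continuous:
  fixes p :: fml
  assumes "wf p" "(M_L :: ('a::{linear_continuum_topology,order_bot,order_top} \<Rightarrow> real) set) \<noteq> {}"
    and "e > 0"
  shows "\<exists>d>0. \<forall>(\<rho> :: nat \<Rightarrow> 'a \<Rightarrow> real) \<rho>'. M_L_on (fv p) \<rho> \<longrightarrow> M_L_on (fv p) \<rho>' \<longrightarrow>
           unif_close (fv p) d \<rho> \<rho>' \<longrightarrow> \<bar>eval \<rho> p - eval \<rho>' p\<bar> \<le> e"
  using assms(1,3)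
proof (induction p arbitrary: e)
  case (Pred \<alpha> i j)
  have "\<bar>eval \<rho> (Pred \<alpha> i j) - eval \<rho>' (Pred \<alpha> i j)\<bar> \<le> e"
    if "M_L_on {i, j} \<rho>" "M_L_on {i, j} \<rho>'" "unif_close {i, j} (e / 3) \<rho> \<rho>'" for \<rho> \<rho>'
    using phi_dist_le[OF _ _ _ _ wf_Pred_bounds[OF Pred(1)], of "\<rho> i" "\<rho> j" "\<rho>' i" "\<rho>' j" "e / 3"] that
    by (simp add: M_L_on_def unif_close_def)
  then show ?case using Pred by (intro exI[of _ "e / 3"]) auto
next
  case (Dist i j)
  have "\<bar>eval \<rho> (Dist i j) - eval \<rho>' (Dist i j)\<bar> \<le> e"
    if "M_L_on {i, j} \<rho>" "M_L_on {i, j} \<rho>'" "unif_close {i, j} (e / 2) \<rho> \<rho>'" for \<rho> \<rho>'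
    using supdist_dist_le[of "\<rho> i" "\<rho> j" "\<rho>' i" "\<rho>' j" "e / 2"] that
    by (auto simp: M_L_on_def unif_close_def)
  then show ?case using Dist by (intro exI[of _ "e / 2"]) auto
next
  case (Conn u ps)
  show ?case
    by (rule eval_Conn_modulus[OF Conn.prems(1) assms(2) Conn.prems(2)]) (use Conn.IH Conn.prems(1) in simp)
next
  case (FSup x p)
  then obtain d where d: "d > 0" "\<forall>(\<sigma> :: nat \<Rightarrow> 'a \<Rightarrow> real) \<sigma>'. M_L_on (fv p) \<sigma> \<longrightarrow>
      M_L_on (fv p) \<sigma>' \<longrightarrow> unif_close (fv p) d \<sigma> \<sigma>' \<longrightarrow> \<bar>eval \<sigma> p - eval \<sigma>' p\<bar> \<le> e"
    by (metis wf.simps(4))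
  have "\<bar>eval \<rho> (FSup x p) - eval \<rho>' (FSup x p)\<bar> \<le> e"
    if "M_L_on (fv (FSup x p)) \<rho>" "M_L_on (fv (FSup x p)) \<rho>'" "unif_close (fv (FSup x p)) d \<rho> \<rho>'"
    for \<rho> \<rho>' :: "nat \<Rightarrow> 'a \<Rightarrow> real"
    using eval_quantifier_modulus(1)[OF _ assms(2) less_imp_le[OF d(1)] d(2)] FSup.prems(1) that by simp
  then show ?case using d(1) by blast
next
  case (FInf x p)
  then obtain d where d: "d > 0" "\<forall>(\<sigma> :: nat \<Rightarrow> 'a \<Rightarrow> real) \<sigma>'. M_L_on (fv p) \<sigma> \<longrightarrow>
      M_L_on (fv p) \<sigma>' \<longrightarrow> unif_close (fv p) d \<sigma> \<sigma>' \<longrightarrow> \<bar>eval \<sigma> p - eval \<sigma>' p\<bar> \<le> e"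
    by (metis wf.simps(5))
  have "\<bar>eval \<rho> (FInf x p) - eval \<rho>' (FInf x p)\<bar> \<le> e"
    if "M_L_on (fv (FInf x p)) \<rho>" "M_L_on (fv (FInf x p)) \<rho>'" "unif_close (fv (FInf x p)) d \<rho> \<rho>'"
    for \<rho> \<rho>' :: "nat \<Rightarrow> 'a \<Rightarrow> real"
    using eval_quantifier_modulus(2)[OF _ assms(2) less_imp_le[OF d(1)] d(2)] FInf.prems(1) that by simp
  then show ?case using d(1) by blast
qed

section \<open>The curve of an assignment\<close>

definition curve_pt :: "nat set \<Rightarrow> (nat \<Rightarrow> 'a \<Rightarrow> real) \<Rightarrow> 'a \<Rightarrow> nat \<Rightarrow> real" where
  "curve_pt V \<rho> t = (\<lambda>i. if i \<in> V then \<rho> i t else 0)"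

definition curve :: "nat set \<Rightarrow> (nat \<Rightarrow> 'a \<Rightarrow> real) \<Rightarrow> (nat \<Rightarrow> real) set" where
  "curve V \<rho> = range (curve_pt V \<rho>)"

definition coord_sum :: "nat set \<Rightarrow> (nat \<Rightarrow> 'a \<Rightarrow> real) \<Rightarrow> 'a \<Rightarrow> real" where
  "coord_sum V \<rho> t = (\<Sum>i\<in>V. \<rho> i t)"

text \<open>As all coordinates are nondecreasing, a point of the curve is determined by its coordinate
  sum, so this is well defined for u in [0, card V]; for other u the choice is arbitrary.\<close>
definition curve_param :: "nat set \<Rightarrow> (nat \<Rightarrow> 'a \<Rightarrow> real) \<Rightarrow> real \<Rightarrow> nat \<Rightarrow> real" where
  "curve_param V \<rho> u = curve_pt V \<rho> (SOME t. coord_sum V \<rho> t = u)"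

definition reparam :: "nat set \<Rightarrow> (nat \<Rightarrow> 'a \<Rightarrow> real) \<Rightarrow> ('b \<Rightarrow> real) \<Rightarrow> nat \<Rightarrow> 'b \<Rightarrow> real" where
  "reparam V \<rho> \<sigma> i = (\<lambda>t. curve_param V \<rho> (\<sigma> t) i)"

lemma curve_subset:
  fixes \<rho> \<rho>' :: "nat \<Rightarrow> 'a \<Rightarrow> real"
  assumes "V \<subseteq> V'" "curve V' \<rho> = curve V' \<rho>'"
  shows "curve V \<rho> = curve V \<rho>'"
proof -
  define r where "r = (\<lambda>(c :: nat \<Rightarrow> real) i. if i \<in> V then c i else 0)"
  have "curve V \<sigma> = r ` curve V' \<sigma>" for \<sigma> :: "nat \<Rightarrow> 'a \<Rightarrow> real"
    unfolding curve_def image_image using assms(1)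
    by (auto intro!: image_cong simp: r_def curve_pt_def fun_eq_iff)
  from this[of \<rho>] this[of \<rho>'] show ?thesis using assms(2) by simp
qed

lemma curve_pt_upd_eq:
  "curve_pt (insert x V) (\<rho>(x := g)) t = (curve_pt V \<rho> t)(x := g t)" if "x \<notin> V"
  using that by (auto simp: curve_pt_def)

context
  fixes V :: "nat set" and \<rho> :: "nat \<Rightarrow> 'a::{linear_continuum_topology,order_bot,order_top} \<Rightarrow> real"
  assumes finite: "finite V" and M_L_on: "M_L_on V \<rho>"
begin

lemma coord_in_M_L: "i \<in> V \<Longrightarrow> \<rho> i \<in> M_L"
  using M_L_on by (auto simp: M_L_on_def)

lemma increasing_onto_coord_sum: "increasing_onto 0 (real (card V)) (coord_sum V \<rho>)"
  unfolding increasing_onto_def coord_sum_def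
proof (intro conjI)
  show "mono (\<lambda>t. \<Sum>i\<in>V. \<rho> i t)"
    by (intro monoI sum_mono monoD[OF M_L_D(1)[OF coord_in_M_L]])
  show "continuous_on UNIV (\<lambda>t. \<Sum>i\<in>V. \<rho> i t)"
    by (intro continuous_on_sum M_L_D(2)[OF coord_in_M_L])
  show "(\<Sum>i\<in>V. \<rho> i bot) = 0"
    by (intro sum.neutral) (simp add: M_L_D(5)[OF coord_in_M_L])
  have "(\<Sum>i\<in>V. \<rho> i top) = (\<Sum>i\<in>V. 1)"
    by (intro sum.cong) (simp_all add: M_L_D(6)[OF coord_in_M_L])
  then show "(\<Sum>i\<in>V. \<rho> i top) = real (card V)" by simp
qed

lemma range_coord_sum: "range (coord_sum V \<rho>) = {0..real (card V)}"
  by (rule range_increasing_onto[OF increasing_onto_coord_sum])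

lemma coord_diff_le_coord_sum_diff:
  assumes "i \<in> V" "t \<le> s"
  shows "0 \<le> \<rho> i s - \<rho> i t" "\<rho> i s - \<rho> i t \<le> coord_sum V \<rho> s - coord_sum V \<rho> t"
proof -
  have nonneg: "0 \<le> \<rho> j s - \<rho> j t" if "j \<in> V" for j
    using coord_in_M_L[OF that] M_L_D(1) assms(2) by (auto simp: mono_def)
  then show "0 \<le> \<rho> i s - \<rho> i t" using assms(1) .
  have "\<rho> i s - \<rho> i t \<le> (\<Sum>j\<in>V. \<rho> j s - \<rho> j t)"
    by (rule member_le_sum[OF assms(1)]) (use nonneg finite in auto)
  then show "\<rho> i s - \<rho> i t \<le> coord_sum V \<rho> s - coord_sum V \<rho> t"
    by (simp add: coord_sum_def sum_subtractf)
qed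

lemma coord_dist_le_coord_sum_dist:
  assumes "i \<in> V"
  shows "\<bar>\<rho> i t - \<rho> i s\<bar> \<le> \<bar>coord_sum V \<rho> t - coord_sum V \<rho> s\<bar>"
  using coord_diff_le_coord_sum_diff[OF assms, of t s] coord_diff_le_coord_sum_diff[OF assms, of s t]
  by (cases t s rule: linorder_le_cases) auto

lemma curve_pt_eq_if_coord_sum_eq:
  "coord_sum V \<rho> t = coord_sum V \<rho> s \<Longrightarrow> curve_pt V \<rho> t = curve_pt V \<rho> s"
  using coord_dist_le_coord_sum_dist[of _ t s] by (auto simp: curve_pt_def)

lemma curve_param_coord_sum: "curve_param V \<rho> (coord_sum V \<rho> t) = curve_pt V \<rho> t"
  unfolding curve_param_def
  by (rule curve_pt_eq_if_coord_sum_eq) (rule someI[of "\<lambda>s. coord_sum V \<rho> s = coord_sum V \<rho> t"], rule refl)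

lemma curve_param_outside: "i \<notin> V \<Longrightarrow> curve_param V \<rho> u i = 0"
  by (simp add: curve_param_def curve_pt_def)

lemma curve_param_diff:
  assumes "u \<in> {0..real (card V)}" "u' \<in> {0..real (card V)}" "u \<le> u'"
  shows "0 \<le> curve_param V \<rho> u' i - curve_param V \<rho> u i"
    and "curve_param V \<rho> u' i - curve_param V \<rho> u i \<le> u' - u"
proof -
  obtain t t' where t: "coord_sum V \<rho> t = u" and t': "coord_sum V \<rho> t' = u'"
    using assms(1,2) range_coord_sum by (metis imageE)
  have "0 \<le> curve_param V \<rho> u' i - curve_param V \<rho> u i \<and>
      curve_param V \<rho> u' i - curve_param V \<rho> u i \<le> u' - u"
  proof (cases "t \<le> t'")
    case True
    then show ?thesis
      using coord_diff_le_coord_sum_diff[of i t t'] curve_param_coord_sum[of t]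
        curve_param_coord_sum[of t'] t t' assms(3)
      by (cases "i \<in> V") (auto simp: curve_pt_def)
  next
    case False
    then have "u = u'"
      using increasing_onto_coord_sum monoD[of "coord_sum V \<rho>" t' t] t t' assms(3)
      by (simp add: increasing_onto_def)
    then show ?thesis by simp
  qed
  then show "0 \<le> curve_param V \<rho> u' i - curve_param V \<rho> u i"
    and "curve_param V \<rho> u' i - curve_param V \<rho> u i \<le> u' - u" by auto
qed

lemma curve_param_lipschitz:
  assumes "u \<in> {0..real (card V)}" "u' \<in> {0..real (card V)}"
  shows "\<bar>curve_param V \<rho> u i - curve_param V \<rho> u' i\<bar> \<le> \<bar>u - u'\<bar>"
  using curve_param_diff[OF assms, of i] curve_param_diff[OF assms(2,1), of i]
  by (cases "u \<le> u'") auto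

lemma mono_on_curve_param: "mono_on {0..real (card V)} (\<lambda>u. curve_param V \<rho> u i)"
  using curve_param_diff(1) by (intro mono_onI) (simp add: algebra_simps)

lemma continuous_on_curve_param: "continuous_on {0..real (card V)} (\<lambda>u. curve_param V \<rho> u i)"
  by (rule lipschitz_on_continuous_on[of 1])
    (auto intro!: lipschitz_onI simp: dist_real_def curve_param_lipschitz)

lemma curve_param_0: "curve_param V \<rho> 0 i = 0"
  using curve_param_coord_sum[of bot] increasing_onto_coord_sum coord_in_M_L M_L_D(5)
  by (auto simp: curve_pt_def increasing_onto_def)

lemma curve_param_card: "i \<in> V \<Longrightarrow> curve_param V \<rho> (real (card V)) i = 1"
  using curve_param_coord_sum[of top] increasing_onto_coord_sum coord_in_M_L M_L_D(6)
  by (auto simp: curve_pt_def increasing_onto_def)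

lemma curve_param_comp_in_M_L:
  assumes "increasing_onto 0 (real (card V)) \<sigma>" "i \<in> V"
  shows "(\<lambda>t. curve_param V \<rho> (\<sigma> t) i) \<in> M_L"
  using increasing_onto_comp[OF assms(1) mono_on_curve_param[of i] continuous_on_curve_param[of i]]
    curve_param_0[of i] curve_param_card[OF assms(2)]
  by (simp add: M_L_iff_increasing_onto)

lemma curve_eq_image_curve_param: "curve V \<rho> = curve_param V \<rho> ` {0..real (card V)}"
  unfolding curve_def range_coord_sum[symmetric] image_image curve_param_coord_sum ..

lemma curve_pt_eq_curve_param:
  assumes "M_L_on V \<rho>'" "curve V \<rho> = curve V \<rho>'"
  shows "curve_pt V \<rho>' t = curve_param V \<rho> (coord_sum V \<rho>' t)"
proof -
  obtain s where s: "curve_pt V \<rho> s = curve_pt V \<rho>' t"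
    using assms(2) by (metis curve_def rangeE rangeI)
  have "(\<Sum>i\<in>V. curve_pt V \<rho> s i) = (\<Sum>i\<in>V. curve_pt V \<rho>' t i)"
    by (simp only: s)
  then have "coord_sum V \<rho> s = coord_sum V \<rho>' t"
    by (simp add: curve_pt_def coord_sum_def)
  then show ?thesis using curve_param_coord_sum[of s] s by simp
qed

lemma M_L_on_reparam: "increasing_onto 0 (real (card V)) \<sigma> \<Longrightarrow> M_L_on V (reparam V \<rho> \<sigma>)"
  by (simp add: M_L_on_def reparam_def curve_param_comp_in_M_L)

lemma curve_pt_reparam: "curve_pt V (reparam V \<rho> \<sigma>) t = curve_param V \<rho> (\<sigma> t)"
  by (auto simp: curve_pt_def reparam_def curve_param_outside)

lemma coord_sum_reparam:
  assumes "increasing_onto 0 (real (card V)) \<sigma>"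
  shows "coord_sum V (reparam V \<rho> \<sigma>) t = \<sigma> t"
proof -
  obtain s where "coord_sum V \<rho> s = \<sigma> t"
    using increasing_onto_in_Icc[OF assms] range_coord_sum by (metis rangeE)
  then show ?thesis
    using curve_param_coord_sum[of s] by (simp add: coord_sum_def reparam_def curve_pt_def)
qed

lemma curve_reparam:
  assumes "increasing_onto 0 (real (card V)) \<sigma>"
  shows "curve V (reparam V \<rho> \<sigma>) = curve V \<rho>"
  unfolding curve_eq_image_curve_param range_increasing_onto[OF assms, symmetric]
  by (simp add: curve_def curve_pt_reparam image_image)

lemma unif_close_reparam:
  assumes "increasing_onto 0 (real (card V)) \<sigma>" "\<And>t. \<bar>\<sigma> t - coord_sum V \<rho> t\<bar> \<le> \<delta>"
  shows "unif_close V \<delta> \<rho> (reparam V \<rho> \<sigma>)"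
  unfolding unif_close_def reparam_def
proof (intro ballI allI)
  fix i t assume i: "i \<in> V"
  have "\<rho> i t = curve_param V \<rho> (coord_sum V \<rho> t) i"
    using curve_param_coord_sum[of t] i by (simp add: curve_pt_def)
  moreover have "coord_sum V \<rho> t \<in> {0..real (card V)}"
    using range_coord_sum by blast
  then have "\<bar>curve_param V \<rho> (coord_sum V \<rho> t) i - curve_param V \<rho> (\<sigma> t) i\<bar> \<le> \<bar>coord_sum V \<rho> t - \<sigma> t\<bar>"
    using increasing_onto_in_Icc[OF assms(1)] by (intro curve_param_lipschitz)
  ultimately show "\<bar>\<rho> i t - curve_param V \<rho> (\<sigma> t) i\<bar> \<le> \<delta>"
    using assms(2)[of t] by (simp add: abs_minus_commute)
qed

lemma partial_sum_curve_param:
  assumes "W \<subseteq> V"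
  shows "continuous_on {0..real (card V)} (\<lambda>u. \<Sum>i\<in>W. curve_param V \<rho> u i)"
    and "mono_on {0..real (card V)} (\<lambda>u. \<Sum>i\<in>W. curve_param V \<rho> u i)"
    and "(\<Sum>i\<in>W. curve_param V \<rho> (coord_sum V \<rho> t) i) = coord_sum W \<rho> t"
proof -
  show "continuous_on {0..real (card V)} (\<lambda>u. \<Sum>i\<in>W. curve_param V \<rho> u i)"
    by (intro continuous_on_sum continuous_on_curve_param)
  show "mono_on {0..real (card V)} (\<lambda>u. \<Sum>i\<in>W. curve_param V \<rho> u i)"
    by (intro mono_onI sum_mono mono_onD[OF mono_on_curve_param])
  show "(\<Sum>i\<in>W. curve_param V \<rho> (coord_sum V \<rho> t) i) = coord_sum W \<rho> t"
    unfolding curve_param_coord_sum using assms by (auto simp: curve_pt_def coord_sum_def intro!: sum.cong)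
qed

end

section \<open>Evaluation depends only on the curve\<close>

lemma curve_insert_fun_of_coord_sum:
  fixes \<rho> \<rho>' :: "nat \<Rightarrow> 'a::{linear_continuum_topology,order_bot,order_top} \<Rightarrow> real"
  assumes "finite W" "x \<notin> W" "M_L_on W \<rho>" "M_L_on W \<rho>'" "curve W \<rho> = curve W \<rho>'"
  shows "curve (insert x W) (\<rho>(x := \<lambda>t. \<phi> (coord_sum W \<rho> t))) =
         curve (insert x W) (\<rho>'(x := \<lambda>t. \<phi> (coord_sum W \<rho>' t)))"
proof -
  define H where "H u = (curve_param W \<rho> u)(x := \<phi> u)" for u
  have "curve (insert x W) (\<sigma>(x := \<lambda>t. \<phi> (coord_sum W \<sigma> t))) = H ` {0..real (card W)}"
    if "M_L_on W \<sigma>" "curve W \<rho> = curve W \<sigma>" for \<sigma>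
  proof -
    have "curve_pt (insert x W) (\<sigma>(x := \<lambda>t. \<phi> (coord_sum W \<sigma> t))) t = H (coord_sum W \<sigma> t)" for t
      using curve_pt_eq_curve_param[OF assms(1,3) that] by (simp add: curve_pt_upd_eq[OF assms(2)] H_def)
    then show ?thesis
      unfolding curve_def range_coord_sum[OF assms(1) that(1), symmetric] by (auto simp: image_iff)
  qed
  from this[OF assms(3) refl] this[OF assms(4,5)] show ?thesis by simp
qed

lemma strict_mono_approx:
  fixes S :: "real \<Rightarrow> real"
  assumes "continuous_on {0..l} S" "mono_on {0..l} S" "S 0 = 0" "S l = k" "0 < l" "0 < k" "0 < \<delta>"
  obtains P where "continuous_on {0..l} P" "strict_mono_on {0..l} P" "P 0 = 0" "P l = k"
    "\<And>v. v \<in> {0..l} \<Longrightarrow> \<bar>P v - S v\<bar> \<le> \<delta>"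
proof -
  define w where "w = min 1 (\<delta> / k)"
  define P where "P v = S v + w * (k * v / l - S v)" for v
  have w: "0 < w" "w \<le> 1" "w * k \<le> \<delta>"
    using assms(6,7) by (auto simp: w_def min_def field_simps)
  have S_range: "S v \<in> {0..k}" if "v \<in> {0..l}" for v
    using mono_onD[OF assms(2), of 0 v] mono_onD[OF assms(2), of v l] that assms(3-5) by auto
  have "strict_mono_on {0..l} P"
  proof (rule strict_mono_onI)
    fix v v' assume vw: "v \<in> {0..l}" "v' \<in> {0..l}" "v < v'"
    have "(1 - w) * S v \<le> (1 - w) * S v'"
      using mono_onD[OF assms(2) vw(1,2)] vw(3) w(2) by (intro mult_left_mono) auto
    moreover have "w * (k * v / l) < w * (k * v' / l)"
      using vw(3) w(1) assms(5,6) by (intro mult_strict_left_mono divide_strict_right_mono) auto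
    ultimately show "P v < P v'" by (simp add: P_def algebra_simps)
  qed
  moreover have "\<bar>P v - S v\<bar> \<le> \<delta>" if "v \<in> {0..l}" for v
  proof -
    have "k * v / l \<in> {0..k}"
      using that assms(5,6) by (auto simp: field_simps)
    then have "\<bar>k * v / l - S v\<bar> \<le> k" using S_range[OF that] by auto
    then have "w * \<bar>k * v / l - S v\<bar> \<le> w * k" using w(1) by (intro mult_left_mono) auto
    moreover have "\<bar>P v - S v\<bar> = w * \<bar>k * v / l - S v\<bar>"
      using w(1) by (simp add: P_def abs_mult)
    ultimately show ?thesis using w(3) by linarith
  qed
  moreover have "continuous_on {0..l} P"
    unfolding P_def using assms(5) by (intro continuous_intros assms(1)) auto
  ultimately show ?thesis using assms(3-5) by (intro that[of P]) (auto simp: P_def)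
qed

lemma strict_mono_homeomorphism:
  fixes P :: "real \<Rightarrow> real"
  assumes "continuous_on {a..b} P" "strict_mono_on {a..b} P" "a \<le> b"
  obtains Q where "homeomorphism {a..b} {P a..P b} P Q" "mono_on {P a..P b} Q"
proof -
  have mono: "mono_on {a..b} P"
    using assms(2) strict_mono_on_imp_mono_on by blast
  have "P ` {a..b} = {P a..P b}"
  proof
    show "P ` {a..b} \<subseteq> {P a..P b}"
      using mono_onD[OF mono, of a] mono_onD[OF mono, of _ b] assms(3) by auto
    show "{P a..P b} \<subseteq> P ` {a..b}"
      using IVT'[of P a _ b] assms(1,3) by fastforce
  qed
  moreover have "inj_on P {a..b}"
    using assms(2) strict_mono_on_imp_inj_on by blast
  ultimately obtain Q where Q: "homeomorphism {a..b} {P a..P b} P Q"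
    using homeomorphism_compact[OF compact_Icc assms(1)] by blast
  have Q_mono: "Q u \<le> Q u'" if "u \<in> {P a..P b}" "u' \<in> {P a..P b}" "u \<le> u'" for u u'
  proof (rule ccontr)
    assume "\<not> Q u \<le> Q u'"
    then have "P (Q u') < P (Q u)"
      using Q that(1,2) by (intro strict_mono_onD[OF assms(2)]) (auto simp: homeomorphism_def)
    then show False using Q that by (auto simp: homeomorphism_def)
  qed
  have "mono_on {P a..P b} Q"
    by (intro mono_onI Q_mono)
  then show ?thesis using Q that by blast
qed

text \<open>Along the curve of (rho, g) the value of g need not be a function of the W-coordinates, since
  g may increase while they stay constant. Reparametrizing rho through a strictly increasing
  perturbation P of the W-sum repairs this at the cost of a uniformly small change of rho.\<close>
lemma approx_by_fun_of_coord_sum: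
  fixes \<rho> :: "nat \<Rightarrow> 'a::{linear_continuum_topology,order_bot,order_top} \<Rightarrow> real"
  assumes W: "finite W" "x \<notin> W" "W \<noteq> {}" and \<rho>: "M_L_on W \<rho>" and g: "g \<in> M_L" and \<delta>: "\<delta> > 0"
  defines "k \<equiv> real (card W)"
  shows "\<exists>\<sigma> \<phi>. increasing_onto 0 k \<sigma> \<and> unif_close W \<delta> \<rho> (reparam W \<rho> \<sigma>) \<and>
           mono_on {0..k} \<phi> \<and> continuous_on {0..k} \<phi> \<and> \<phi> 0 = 0 \<and> \<phi> k = 1 \<and> (\<forall>t. g t = \<phi> (\<sigma> t))"
proof -
  define V where "V = insert x W"
  have k: "1 \<le> k" "real (card V) = k + 1"
    using W by (simp_all add: k_def V_def Suc_le_eq card_gt_0_iff)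
  have V: "finite V" "M_L_on V (\<rho>(x := g))" "W \<subseteq> V"
    using W M_L_on_upd[OF \<rho> g] by (auto simp: V_def)
  define \<tau> where "\<tau> = coord_sum V (\<rho>(x := g))"
  define \<Gamma> where "\<Gamma> = curve_param V (\<rho>(x := g))"
  define S where "S = (\<lambda>v. \<Sum>i\<in>W. \<Gamma> v i)"
  have \<tau>: "increasing_onto 0 (k + 1) \<tau>"
    using increasing_onto_coord_sum[OF V(1,2)] k(2) by (simp add: \<tau>_def)
  have "coord_sum W (\<rho>(x := g)) = coord_sum W \<rho>"
    using W(2) by (auto simp: coord_sum_def fun_eq_iff intro!: sum.cong)
  then have S\<tau>: "S (\<tau> t) = coord_sum W \<rho> t" for t
    using partial_sum_curve_param(3)[OF V] by (simp add: S_def \<Gamma>_def \<tau>_def)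
  have S: "continuous_on {0..k + 1} S" "mono_on {0..k + 1} S" "S 0 = 0" "S (k + 1) = k"
    using partial_sum_curve_param(1,2)[OF V] S\<tau>[of bot] S\<tau>[of top] \<tau> increasing_onto_coord_sum[OF W(1) \<rho>] k(2)
    by (simp_all add: S_def \<Gamma>_def increasing_onto_def k_def)
  obtain P where P: "continuous_on {0..k + 1} P" "strict_mono_on {0..k + 1} P" "P 0 = 0" "P (k + 1) = k"
    "\<And>v. v \<in> {0..k + 1} \<Longrightarrow> \<bar>P v - S v\<bar> \<le> \<delta>"
    by (rule strict_mono_approx[OF S]) (use k \<delta> in auto)
  obtain Q where Q: "homeomorphism {0..k + 1} {0..k} P Q" "mono_on {0..k} Q"
    using strict_mono_homeomorphism[OF P(1,2)] P(3,4) k(1) by auto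
  have QP: "\<And>v. v \<in> {0..k + 1} \<Longrightarrow> Q (P v) = v" "Q ` {0..k} = {0..k + 1}" "continuous_on {0..k} Q"
    using Q(1) by (auto simp: homeomorphism_def)
  define \<phi> where "\<phi> u = \<Gamma> (Q u) x" for u
  have \<sigma>: "increasing_onto 0 k (\<lambda>t. P (\<tau> t))"
    using increasing_onto_comp[OF \<tau> strict_mono_on_imp_mono_on[OF P(2)] P(1)] P(3,4) by simp
  moreover have "\<bar>P (\<tau> t) - coord_sum W \<rho> t\<bar> \<le> \<delta>" for t
    using P(5)[OF increasing_onto_in_Icc[OF \<tau>]] S\<tau> by simp
  then have "unif_close W \<delta> \<rho> (reparam W \<rho> (\<lambda>t. P (\<tau> t)))"
    by (rule unif_close_reparam[OF W(1) \<rho> \<sigma>[unfolded k_def]])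
  moreover have "mono_on {0..k} \<phi>"
    unfolding \<phi>_def \<Gamma>_def using QP(2) k(2)
    by (intro mono_onI mono_onD[OF mono_on_curve_param[OF V(1,2)]] mono_onD[OF Q(2)]) auto
  moreover have "continuous_on {0..k} \<phi>"
    unfolding \<phi>_def \<Gamma>_def using QP(2) k(2)
    by (intro continuous_on_compose2[OF continuous_on_curve_param[OF V(1,2), of x] QP(3)]) auto
  moreover have "\<phi> 0 = 0" "\<phi> k = 1"
    using QP(1)[of 0] QP(1)[of "k + 1"] P(3,4) k curve_param_0[OF V(1,2)] curve_param_card[OF V(1,2)]
    by (simp_all add: \<phi>_def \<Gamma>_def V_def)
  moreover have "g t = \<phi> (P (\<tau> t))" for t
    using curve_param_coord_sum[OF V(1,2), of t] QP(1) increasing_onto_in_Icc[OF \<tau>]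
    by (simp add: \<phi>_def \<Gamma>_def \<tau>_def curve_pt_def V_def)
  ultimately show ?thesis by blast
qed

lemma back_and_forth:
  fixes \<rho> \<rho>' :: "nat \<Rightarrow> 'a::{linear_continuum_topology,order_bot,order_top} \<Rightarrow> real"
  assumes W: "finite W" "x \<notin> W"
    and \<rho>: "M_L_on W \<rho>" and \<rho>': "M_L_on W \<rho>'" and same_curve: "curve W \<rho> = curve W \<rho>'"
    and g: "g \<in> M_L" and \<delta>: "\<delta> > 0"
  shows "\<exists>\<rho>1 h. M_L_on W \<rho>1 \<and> unif_close W \<delta> \<rho> \<rho>1 \<and> h \<in> M_L \<and>
           curve (insert x W) (\<rho>1(x := g)) = curve (insert x W) (\<rho>'(x := h))"
proof (cases "W = {}")
  case True
  then have "curve_pt (insert x W) (\<rho>(x := g)) = curve_pt (insert x W) (\<rho>'(x := g))"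
    by (auto simp: curve_pt_def fun_eq_iff)
  then have "curve (insert x W) (\<rho>(x := g)) = curve (insert x W) (\<rho>'(x := g))"
    by (simp add: curve_def)
  then show ?thesis using \<rho> g \<delta> by (auto simp: unif_close_def)
next
  case False
  then obtain \<sigma> \<phi> where \<sigma>: "increasing_onto 0 (real (card W)) \<sigma>" "unif_close W \<delta> \<rho> (reparam W \<rho> \<sigma>)"
    and \<phi>: "mono_on {0..real (card W)} \<phi>" "continuous_on {0..real (card W)} \<phi>"
      "\<phi> 0 = 0" "\<phi> (real (card W)) = 1" "\<And>t. g t = \<phi> (\<sigma> t)"
    using approx_by_fun_of_coord_sum[OF W False \<rho> g \<delta>] by blast
  define \<rho>1 where "\<rho>1 = reparam W \<rho> \<sigma>"
  have \<rho>1: "M_L_on W \<rho>1" "curve W \<rho>1 = curve W \<rho>'" "g = (\<lambda>t. \<phi> (coord_sum W \<rho>1 t))"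
    using M_L_on_reparam[OF W(1) \<rho> \<sigma>(1)] curve_reparam[OF W(1) \<rho> \<sigma>(1)] same_curve
      coord_sum_reparam[OF W(1) \<rho> \<sigma>(1)] \<phi>(5)
    by (simp_all add: \<rho>1_def fun_eq_iff)
  have "(\<lambda>t. \<phi> (coord_sum W \<rho>' t)) \<in> M_L"
    using increasing_onto_comp[OF increasing_onto_coord_sum[OF W(1) \<rho>'] \<phi>(1,2)] \<phi>(3,4)
    by (simp add: M_L_iff_increasing_onto)
  then show ?thesis
    using \<rho>1 \<sigma>(2) curve_insert_fun_of_coord_sum[OF W \<rho>1(1) \<rho>' \<rho>1(2)] unfolding \<rho>1_def by metis
qed

lemma finite_fv: "finite (fv p)"
  by (induction p) auto

lemma eval_upd_approx:
  fixes \<rho> \<rho>' :: "nat \<Rightarrow> 'a::{linear_continuum_topology,order_bot,order_top} \<Rightarrow> real"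
  assumes IH: "\<And>(\<rho> :: nat \<Rightarrow> 'a \<Rightarrow> real) (\<rho>' :: nat \<Rightarrow> 'a \<Rightarrow> real). M_L_on (fv p) \<rho> \<Longrightarrow> M_L_on (fv p) \<rho>' \<Longrightarrow>
                 curve (fv p) \<rho> = curve (fv p) \<rho>' \<Longrightarrow> eval \<rho> p = eval \<rho>' p"
    and p: "wf p" and ne: "(M_L :: ('a \<Rightarrow> real) set) \<noteq> {}"
    and \<rho>: "M_L_on (fv p - {x}) \<rho>" and \<rho>': "M_L_on (fv p - {x}) \<rho>'"
    and same_curve: "curve (fv p - {x}) \<rho> = curve (fv p - {x}) \<rho>'"
    and g: "g \<in> M_L" and \<epsilon>: "\<epsilon> > 0"
  shows "\<exists>h\<in>M_L. \<bar>eval (\<rho>(x := g)) p - eval (\<rho>'(x := h)) p\<bar> \<le> \<epsilon>"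
proof -
  obtain d where d: "d > 0" "\<And>(\<sigma> :: nat \<Rightarrow> 'a \<Rightarrow> real) (\<sigma>' :: nat \<Rightarrow> 'a \<Rightarrow> real). M_L_on (fv p) \<sigma> \<Longrightarrow> M_L_on (fv p) \<sigma>' \<Longrightarrow>
      unif_close (fv p) d \<sigma> \<sigma>' \<Longrightarrow> \<bar>eval \<sigma> p - eval \<sigma>' p\<bar> \<le> \<epsilon>"
    using eval_uniformly_continuous[OF p ne \<epsilon>] by blast
  obtain \<rho>1 h where \<rho>1: "M_L_on (fv p - {x}) \<rho>1" "unif_close (fv p - {x}) d \<rho> \<rho>1" "h \<in> M_L"
    "curve (insert x (fv p - {x})) (\<rho>1(x := g)) = curve (insert x (fv p - {x})) (\<rho>'(x := h))"
    using back_and_forth[OF finite_Diff[OF finite_fv] _ \<rho> \<rho>' same_curve g d(1)] by blast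
  have "\<bar>eval (\<rho>(x := g)) p - eval (\<rho>1(x := g)) p\<bar> \<le> \<epsilon>"
    using d \<rho>1(2) by (intro d(2) M_L_on_upd_Diff[OF \<rho> g] M_L_on_upd_Diff[OF \<rho>1(1) g] unif_close_upd_Diff) auto
  moreover have "curve (fv p) (\<rho>1(x := g)) = curve (fv p) (\<rho>'(x := h))"
    by (rule curve_subset[OF _ \<rho>1(4)]) auto
  then have "eval (\<rho>1(x := g)) p = eval (\<rho>'(x := h)) p"
    by (rule IH[OF M_L_on_upd_Diff[OF \<rho>1(1) g] M_L_on_upd_Diff[OF \<rho>' \<rho>1(3)]])
  ultimately show ?thesis using \<rho>1(3) by auto
qed

lemma eval_quantifier_eq_if_curve_eq:
  fixes \<rho> \<rho>' :: "nat \<Rightarrow> 'a::{linear_continuum_topology,order_bot,order_top} \<Rightarrow> real"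
  assumes IH: "\<And>(\<sigma> :: nat \<Rightarrow> 'a \<Rightarrow> real) (\<sigma>' :: nat \<Rightarrow> 'a \<Rightarrow> real). M_L_on (fv p) \<sigma> \<Longrightarrow>
                 M_L_on (fv p) \<sigma>' \<Longrightarrow> curve (fv p) \<sigma> = curve (fv p) \<sigma>' \<Longrightarrow> eval \<sigma> p = eval \<sigma>' p"
    and p: "wf p" and ne: "(M_L :: ('a \<Rightarrow> real) set) \<noteq> {}"
    and \<rho>: "M_L_on (fv p - {x}) \<rho>" "M_L_on (fv p - {x}) \<rho>'"
    and same_curve: "curve (fv p - {x}) \<rho> = curve (fv p - {x}) \<rho>'"
  shows "eval \<rho> (FSup x p) = eval \<rho>' (FSup x p)" "eval \<rho> (FInf x p) = eval \<rho>' (FInf x p)"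
proof -
  have "\<bar>eval \<rho> (FSup x p) - eval \<rho>' (FSup x p)\<bar> \<le> \<epsilon> \<and> \<bar>eval \<rho> (FInf x p) - eval \<rho>' (FInf x p)\<bar> \<le> \<epsilon>"
    if \<epsilon>: "\<epsilon> > 0" for \<epsilon>
  proof -
    have forward: "\<exists>h\<in>M_L. \<bar>eval (\<rho>(x := g)) p - eval (\<rho>'(x := h)) p\<bar> \<le> \<epsilon>" if "g \<in> M_L" for g
      by (rule eval_upd_approx[OF IH p ne \<rho> same_curve that \<epsilon>])
    have backward: "\<exists>g\<in>M_L. \<bar>eval (\<rho>(x := g)) p - eval (\<rho>'(x := h)) p\<bar> \<le> \<epsilon>" if h: "h \<in> M_L" for h
    proof -
      obtain g where "g \<in> M_L" "\<bar>eval (\<rho>'(x := h)) p - eval (\<rho>(x := g)) p\<bar> \<le> \<epsilon>"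
        using eval_upd_approx[OF IH p ne \<rho>(2,1) same_curve[symmetric] h \<epsilon>] by blast
      then show ?thesis by (intro bexI[of _ g]) (simp_all add: abs_minus_commute)
    qed
    show ?thesis using eval_quantifier_close[OF p ne \<rho> forward backward] by simp
  qed
  then have "eval \<rho> (FSup x p) - eval \<rho>' (FSup x p) = 0" "eval \<rho> (FInf x p) - eval \<rho>' (FInf x p) = 0"
    by (intro dense_eq0_I; blast)+
  then show "eval \<rho> (FSup x p) = eval \<rho>' (FSup x p)" "eval \<rho> (FInf x p) = eval \<rho>' (FInf x p)"
    by simp_all
qed

lemma phi_eq_if_curve_eq:
  assumes "\<rho> i \<in> M_L" "\<rho> j \<in> M_L" "\<rho>' i \<in> M_L" "\<rho>' j \<in> M_L" "0 \<le> \<alpha>" "\<alpha> \<le> 2"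
    and "curve {i, j} \<rho> = curve {i, j} \<rho>'"
  shows "phi \<alpha> (\<rho> i) (\<rho> j) = phi \<alpha> (\<rho>' i) (\<rho>' j)"
proof -
  obtain t where t: "\<rho> i t + \<rho> j t = \<alpha>"
    using phi_exists[OF assms(1,2,5,6)] by blast
  have "curve_pt {i, j} \<rho> t \<in> curve {i, j} \<rho>'"
    using assms(7)[symmetric] by (simp add: curve_def)
  then obtain s where s: "curve_pt {i, j} \<rho>' s = curve_pt {i, j} \<rho> t"
    by (auto simp: curve_def)
  have "\<rho>' i s = \<rho> i t" "\<rho>' j s = \<rho> j t"
    using fun_cong[OF s, of i] fun_cong[OF s, of j] by (simp_all add: curve_pt_def)
  then show ?thesis using phi_eq[OF assms(1,2) t] phi_eq[OF assms(3,4), of s] t by simp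
qed

lemma eval_eq_if_curve_eq:
  fixes \<rho> \<rho>' :: "nat \<Rightarrow> 'a::{linear_continuum_topology,order_bot,order_top} \<Rightarrow> real"
  assumes "wf p" "(M_L :: ('a \<Rightarrow> real) set) \<noteq> {}"
    and "M_L_on (fv p) \<rho>" "M_L_on (fv p) \<rho>'" "curve (fv p) \<rho> = curve (fv p) \<rho>'"
  shows "eval \<rho> p = eval \<rho>' p"
  using assms(1,3-5)
proof (induction p arbitrary: \<rho> \<rho>')
  case (Pred \<alpha> i j)
  then show ?case
    using phi_eq_if_curve_eq[OF _ _ _ _ wf_Pred_bounds[OF Pred(1)], of \<rho> i j \<rho>'] by (simp add: M_L_on_def)
next
  case (Dist i j)
  have "range (\<lambda>t. \<bar>\<sigma> i t - \<sigma> j t\<bar>) = (\<lambda>c. \<bar>c i - c j\<bar>) ` curve {i, j} \<sigma>"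
    for \<sigma> :: "nat \<Rightarrow> 'a \<Rightarrow> real"
    unfolding curve_def image_image by (auto simp: curve_pt_def)
  then show ?case using Dist(4) by (simp add: supdist_def)
next
  case (Conn u ps)
  have "eval \<rho> q = eval \<rho>' q" if q: "q \<in> set ps" for q
  proof -
    have sub: "fv q \<subseteq> fv (Conn u ps)" using q by auto
    show ?thesis
      using Conn.prems(1) q
      by (intro Conn.IH[OF q _ M_L_on_subset[OF sub Conn.prems(2)] M_L_on_subset[OF sub Conn.prems(3)]
          curve_subset[OF sub Conn.prems(4)]]) simp
  qed
  then have "map (eval \<rho>) ps = map (eval \<rho>') ps" by simp
  then show ?case unfolding eval_Conn by (simp only:)
next
  case (FSup x p)
  have IH: "eval \<sigma> p = eval \<sigma>' p"
    if "M_L_on (fv p) \<sigma>" "M_L_on (fv p) \<sigma>'" "curve (fv p) \<sigma> = curve (fv p) \<sigma>'"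
    for \<sigma> \<sigma>' :: "nat \<Rightarrow> 'a \<Rightarrow> real"
    by (rule FSup.IH[OF _ that]) (use FSup.prems(1) in simp)
  show ?case
    by (rule eval_quantifier_eq_if_curve_eq(1)[OF IH _ assms(2)]) (use FSup.prems in simp_all)
next
  case (FInf x p)
  have IH: "eval \<sigma> p = eval \<sigma>' p"
    if "M_L_on (fv p) \<sigma>" "M_L_on (fv p) \<sigma>'" "curve (fv p) \<sigma> = curve (fv p) \<sigma>'"
    for \<sigma> \<sigma>' :: "nat \<Rightarrow> 'a \<Rightarrow> real"
    by (rule FInf.IH[OF _ that]) (use FInf.prems(1) in simp)
  show ?case
    by (rule eval_quantifier_eq_if_curve_eq(2)[OF IH _ assms(2)]) (use FInf.prems in simp_all)
qed

section \<open>Assignments of the same type have the same curve\<close>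

lemma phi_probe_upper:
  fixes f :: "'a::{linear_continuum_topology,order_bot,order_top} \<Rightarrow> real"
  assumes "f \<in> M_L" "h \<in> M_L" "0 \<le> \<alpha>" "\<alpha> \<le> 1" "\<bar>f s - \<alpha>\<bar> \<le> \<eta>" "0 \<le> \<theta>"
    and before: "\<And>t. t < s \<Longrightarrow> 0 < h t \<Longrightarrow> 1 - \<theta> \<le> f t"
    and after: "\<And>t. s < t \<Longrightarrow> h t < 1 \<Longrightarrow> f t - f s \<le> \<theta>"
  shows "\<alpha> - phi \<alpha> f h \<le> \<eta> + \<theta>" "phi 1 f h - \<alpha> \<le> \<eta> + \<theta>"
proof -
  have \<eta>: "0 \<le> \<eta>" using assms(5) by linarith
  obtain t1 where t1: "f t1 + h t1 = \<alpha>" using phi_exists[OF assms(1,2,3)] assms(4) by auto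
  obtain t2 where t2: "f t2 + h t2 = 1" using phi_exists[OF assms(1,2), of 1] by auto
  have "\<alpha> - f t1 \<le> \<eta> + \<theta>"
  proof (cases "s \<le> t1")
    case True
    then show ?thesis using monoD[OF M_L_D(1)[OF assms(1)] True] assms(5,6) by linarith
  next
    case False
    then show ?thesis
      using before[of t1] t1 assms(4,6) \<eta> M_L_D(3)[OF assms(2), of t1] by fastforce
  qed
  then show "\<alpha> - phi \<alpha> f h \<le> \<eta> + \<theta>" using phi_eq[OF assms(1,2) t1] by simp
  have "f t2 - \<alpha> \<le> \<eta> + \<theta>"
  proof (cases "t2 \<le> s")
    case True
    then show ?thesis using monoD[OF M_L_D(1)[OF assms(1)] True] assms(5,6) by linarith
  next
    case False
    show ?thesis
    proof (cases "h t2 < 1")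
      case True
      moreover have "s < t2" using False by simp
      ultimately show ?thesis using after[of t2] assms(5) by fastforce
    next
      case False
      then have "f t2 = 0" using t2 M_L_D(4)[OF assms(2), of t2] by simp
      then show ?thesis using assms(3,5,6) by simp
    qed
  qed
  then show "phi 1 f h - \<alpha> \<le> \<eta> + \<theta>" using phi_eq[OF assms(1,2) t2] by simp
qed

lemma phi_probe_lower:
  fixes f :: "'a::{linear_continuum_topology,order_bot,order_top} \<Rightarrow> real"
  assumes "f \<in> M_L" "h \<in> M_L" "0 \<le> \<alpha>" "\<alpha> \<le> 1" "h s = \<eta>"
    and "\<alpha> - phi \<alpha> f h < \<eta>" "phi 1 f h - \<alpha> < \<eta>"
  shows "\<bar>f s - \<alpha>\<bar> \<le> 2 * \<eta>"
proof -
  obtain t1 where t1: "f t1 + h t1 = \<alpha>" using phi_exists[OF assms(1,2,3)] assms(4) by auto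
  obtain t2 where t2: "f t2 + h t2 = 1" using phi_exists[OF assms(1,2), of 1] by auto
  have f_mono: "f t \<le> f t'" if "h t < h t'" for t t'
  proof -
    have "t \<le> t'"
    proof (rule ccontr)
      assume "\<not> t \<le> t'"
      then have "h t' \<le> h t" using monoD[OF M_L_D(1)[OF assms(2)], of t' t] by simp
      then show False using that by simp
    qed
    then show ?thesis using monoD[OF M_L_D(1)[OF assms(1)]] by blast
  qed
  have "\<alpha> - \<eta> < f s"
    using f_mono[of t1 s] assms(5,6) phi_eq[OF assms(1,2) t1] t1 by fastforce
  moreover have "f s \<le> \<alpha> + 2 * \<eta>"
  proof (cases "\<eta> \<le> 1 - \<alpha> - \<eta>")
    case True
    have "f t2 < \<alpha> + \<eta>" using assms(7) phi_eq[OF assms(1,2) t2] by simp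
    then have "h s < h t2" using True assms(5) t2 by simp
    then show ?thesis
      using f_mono[of s t2] \<open>f t2 < \<alpha> + \<eta>\<close> assms(5) M_L_D(3)[OF assms(2), of s] by simp
  next
    case False
    then show ?thesis using M_L_D(4)[OF assms(1), of s] by linarith
  qed
  ultimately show ?thesis by (simp add: abs_le_iff)
qed

definition max_upto :: "nat \<Rightarrow> (nat \<Rightarrow> real) \<Rightarrow> real" where
  "max_upto m f = foldr (\<lambda>i acc. max acc (f i)) [0..<m] 0"

lemma max_upto_le_iff: "max_upto m f \<le> B \<longleftrightarrow> 0 \<le> B \<and> (\<forall>i<m. f i \<le> B)"
proof -
  have "foldr (\<lambda>i acc. max acc (f i)) l 0 \<le> B \<longleftrightarrow> 0 \<le> B \<and> (\<forall>i\<in>set l. f i \<le> B)" for l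
    by (induction l) auto
  then show ?thesis by (auto simp: max_upto_def)
qed

lemma max_upto_ge: "0 \<le> max_upto m f" "i < m \<Longrightarrow> f i \<le> max_upto m f"
  using max_upto_le_iff[of m f "max_upto m f"] by auto

lemma continuous_on_max_upto:
  "(\<And>i. i < m \<Longrightarrow> continuous_on S (\<lambda>v. F v i)) \<Longrightarrow> continuous_on S (\<lambda>v. max_upto m (F v))"
proof -
  have "(\<And>i. i \<in> set l \<Longrightarrow> continuous_on S (\<lambda>v. F v i)) \<Longrightarrow>
      continuous_on S (\<lambda>v. foldr (\<lambda>i acc. max acc (F v i)) l 0)" for l
    by (induction l) (auto intro!: continuous_intros)
  then show "(\<And>i. i < m \<Longrightarrow> continuous_on S (\<lambda>v. F v i)) \<Longrightarrow> ?thesis"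
    unfolding max_upto_def by (metis atLeastLessThan_iff set_upt)
qed

definition coord_penalty :: "(nat \<Rightarrow> rat) \<Rightarrow> (nat \<Rightarrow> real) \<Rightarrow> nat \<Rightarrow> real" where
  "coord_penalty a v i = max (of_rat (a i) - v (2 * i)) (v (2 * i + 1) - of_rat (a i))"

definition probe_atoms :: "nat \<Rightarrow> (nat \<Rightarrow> rat) \<Rightarrow> fml list" where
  "probe_atoms m a =
     map (\<lambda>k. if even k then Pred (a (k div 2)) (k div 2) m else Pred 1 (k div 2) m) [0..<2 * m]"

text \<open>With the variable m as a probe h, the atoms evaluate to phi_{a i}(x_i, h) and
  phi_1(x_i, h). The formula is small iff the curve of x_0, ..., x_{m-1} passes close to the point a:
  a steep h rising at a point s of the curve makes both atoms close to a i.\<close>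
definition dist_formula :: "nat \<Rightarrow> (nat \<Rightarrow> rat) \<Rightarrow> fml" where
  "dist_formula m a = FInf m (Conn (\<lambda>v. max_upto m (coord_penalty a v)) (probe_atoms m a))"

definition probe_deviation :: "nat \<Rightarrow> (nat \<Rightarrow> 'a \<Rightarrow> real) \<Rightarrow> ('a \<Rightarrow> real) \<Rightarrow> (nat \<Rightarrow> rat) \<Rightarrow> real" where
  "probe_deviation m \<rho> h a =
     max_upto m (\<lambda>i. max (of_rat (a i) - phi (of_rat (a i)) (\<rho> i) h) (phi 1 (\<rho> i) h - of_rat (a i)))"

lemma wf_dist_formula:
  assumes "\<And>i. i < m \<Longrightarrow> a i \<in> {0..1}"
  shows "wf (dist_formula m a)"
proof -
  have "continuous_on cube (\<lambda>v. max_upto m (coord_penalty a v))"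
    unfolding coord_penalty_def
    by (intro continuous_on_max_upto continuous_intros continuous_on_product_then_coordinatewise
        continuous_on_id)
  moreover have "max_upto m (coord_penalty a v) \<in> {0..1}" if "v \<in> cube" for v
  proof -
    have "coord_penalty a v i \<le> 1" if "i < m" for i
    proof -
      have "0 \<le> (of_rat (a i) :: real)" "(of_rat (a i) :: real) \<le> 1"
        using of_rat_unit[OF assms[OF that]] by simp_all
      moreover have "0 \<le> v (2 * i)" "v (2 * i + 1) \<le> 1"
        using \<open>v \<in> cube\<close> by (simp_all add: cube_def)
      ultimately show ?thesis unfolding coord_penalty_def by (intro max.boundedI; linarith)
    qed
    then show ?thesis using max_upto_le_iff max_upto_ge(1) by auto
  qed
  moreover have "wf q" if "q \<in> set (probe_atoms m a)" for q
    using assms that by (auto simp: probe_atoms_def)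
  ultimately show ?thesis by (simp add: dist_formula_def)
qed

lemma fv_dist_formula: "fv (dist_formula m a) \<subseteq> {..<m}"
proof -
  have "fv q \<subseteq> insert m {..<m}" if "q \<in> set (probe_atoms m a)" for q
    using that by (auto simp: probe_atoms_def less_mult_imp_div_less mult.commute)
  then show ?thesis by (auto simp: dist_formula_def)
qed

lemma eval_dist_formula: "eval \<rho> (dist_formula m a) = (INF h\<in>M_L. probe_deviation m \<rho> h a)"
proof -
  have "eval (\<rho>(m := h)) (Conn (\<lambda>v. max_upto m (coord_penalty a v)) (probe_atoms m a)) =
      probe_deviation m \<rho> h a" for h
    unfolding eval_Conn probe_deviation_def max_upto_def
    by (intro foldr_cong) (auto simp: coord_penalty_def padded_def probe_atoms_def)
  then show ?thesis by (simp add: dist_formula_def)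
qed

lemma coord_sum_le_coord:
  fixes \<rho> :: "nat \<Rightarrow> 'a::{linear_continuum_topology,order_bot,order_top} \<Rightarrow> real"
  assumes "finite V" "M_L_on V \<rho>" "i \<in> V"
  shows "coord_sum V \<rho> t \<le> \<rho> i t + (real (card V) - 1)"
proof -
  have "coord_sum V \<rho> t = \<rho> i t + (\<Sum>j\<in>V - {i}. \<rho> j t)"
    unfolding coord_sum_def using assms(1,3) by (simp add: sum.remove)
  moreover have "(\<Sum>j\<in>V - {i}. \<rho> j t) \<le> real (card (V - {i})) * 1"
    by (rule sum_bounded_above) (use assms(2) in \<open>auto simp: M_L_on_def intro: M_L_D(4)\<close>)
  moreover have "0 < card V"
    using assms(1,3) card_gt_0_iff by blast
  ultimately show ?thesis
    using assms(3) by (simp add: card_Diff_singleton of_nat_diff)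
qed

text \<open>A steep ramp of the coordinate sum at s; starting it no later than m - theta keeps
  its value at top equal to 1.\<close>
lemma exists_ramp:
  fixes \<rho> :: "nat \<Rightarrow> 'a::{linear_continuum_topology,order_bot,order_top} \<Rightarrow> real"
  assumes m: "1 \<le> m" and \<rho>: "M_L_on {..<m} \<rho>" and \<theta>: "0 < \<theta>" "\<theta> \<le> 1"
  obtains h where "h \<in> M_L"
    and "\<And>i t. i < m \<Longrightarrow> t < s \<Longrightarrow> 0 < h t \<Longrightarrow> 1 - \<theta> \<le> \<rho> i t"
    and "\<And>i t. i < m \<Longrightarrow> s < t \<Longrightarrow> h t < 1 \<Longrightarrow> \<rho> i t - \<rho> i s \<le> \<theta>"
proof -
  define \<tau> where "\<tau> = coord_sum {..<m} \<rho>"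
  define c where "c = min (\<tau> s) (real m - \<theta>)"
  define \<phi> where "\<phi> u = min 1 (max 0 ((u - c) / \<theta>))" for u
  define h where "h t = \<phi> (\<tau> t)" for t
  have \<tau>: "increasing_onto 0 (real m) \<tau>"
    using increasing_onto_coord_sum[OF _ \<rho>] by (simp add: \<tau>_def)
  have c: "0 \<le> c" "c \<le> \<tau> s" "c \<le> real m - \<theta>"
    using increasing_onto_in_Icc[OF \<tau>, of s] m \<theta> by (auto simp: c_def)
  have "mono_on {0..real m} \<phi>"
    unfolding \<phi>_def by (intro mono_onI min.mono max.mono divide_right_mono) (use \<theta> in auto)
  moreover have "continuous_on {0..real m} \<phi>"
    unfolding \<phi>_def using \<theta> by (intro continuous_intros) auto
  ultimately have "increasing_onto (\<phi> 0) (\<phi> (real m)) h"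
    unfolding h_def by (rule increasing_onto_comp[OF \<tau>])
  moreover have "\<phi> 0 = 0" "\<phi> (real m) = 1"
    using c \<theta> by (auto simp: \<phi>_def divide_nonpos_pos le_divide_eq)
  ultimately have "h \<in> M_L" by (simp add: M_L_iff_increasing_onto)
  moreover have "1 - \<theta> \<le> \<rho> i t" if "i < m" "t < s" "0 < h t" for i t
  proof -
    have "0 < (\<tau> t - c) / \<theta>"
      using that(3) by (simp add: h_def \<phi>_def)
    then have "c < \<tau> t"
      using \<theta>(1) by (simp add: zero_less_divide_iff)
    moreover have "\<tau> t \<le> \<tau> s"
      using that(2) \<tau> by (simp add: increasing_onto_def monoD)
    ultimately have "real m - \<theta> < \<tau> t" by (auto simp: c_def)
    then show ?thesis using coord_sum_le_coord[OF _ \<rho>, of i t] that(1) by (simp add: \<tau>_def)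
  qed
  moreover have "\<rho> i t - \<rho> i s \<le> \<theta>" if "i < m" "s < t" "h t < 1" for i t
  proof -
    have "(\<tau> t - c) / \<theta> < 1"
      using that(3) by (simp add: h_def \<phi>_def)
    then have "\<tau> t - c < \<theta>"
      using \<theta>(1) by (simp add: divide_less_eq)
    then show ?thesis
      using coord_diff_le_coord_sum_diff(2)[OF _ \<rho> _ less_imp_le[OF that(2)], of i] that(1) c(2)
      by (simp add: \<tau>_def)
  qed
  ultimately show ?thesis using that by blast
qed

lemma probe_deviation_le_if_near:
  fixes \<rho> :: "nat \<Rightarrow> 'a::{linear_continuum_topology,order_bot,order_top} \<Rightarrow> real"
  assumes m: "1 \<le> m" and \<rho>: "M_L_on {..<m} \<rho>" and a: "\<And>i. i < m \<Longrightarrow> a i \<in> {0..1}"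
    and near: "\<And>i. i < m \<Longrightarrow> \<bar>\<rho> i s - of_rat (a i)\<bar> \<le> \<eta>" and \<theta>: "0 < \<theta>" "\<theta> \<le> 1"
  shows "\<exists>h\<in>M_L. probe_deviation m \<rho> h a \<le> \<eta> + \<theta>"
proof -
  obtain h where h: "h \<in> M_L"
    and before: "\<And>i t. i < m \<Longrightarrow> t < s \<Longrightarrow> 0 < h t \<Longrightarrow> 1 - \<theta> \<le> \<rho> i t"
    and after: "\<And>i t. i < m \<Longrightarrow> s < t \<Longrightarrow> h t < 1 \<Longrightarrow> \<rho> i t - \<rho> i s \<le> \<theta>"
    using exists_ramp[OF m \<rho> \<theta>] by blast
  have "max (of_rat (a i) - phi (of_rat (a i)) (\<rho> i) h) (phi 1 (\<rho> i) h - of_rat (a i)) \<le> \<eta> + \<theta>"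
    if i: "i < m" for i
  proof -
    have "\<rho> i \<in> M_L" using \<rho> i by (simp add: M_L_on_def)
    moreover have "(of_rat (a i) :: real) \<in> {0..1}" using a[OF i] by (rule of_rat_unit)
    ultimately show ?thesis
      using phi_probe_upper[of "\<rho> i" h "of_rat (a i)" s \<eta> \<theta>] h near[OF i] \<theta>(1)
        before[OF i] after[OF i] by auto
  qed
  moreover have "0 \<le> \<eta> + \<theta>"
    using near[of 0] m \<theta>(1) by fastforce
  ultimately have "probe_deviation m \<rho> h a \<le> \<eta> + \<theta>"
    unfolding probe_deviation_def max_upto_le_iff by auto
  then show ?thesis using h by blast
qed

lemma near_if_probe_deviation_less:
  fixes \<rho> :: "nat \<Rightarrow> 'a::{linear_continuum_topology,order_bot,order_top} \<Rightarrow> real"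
  assumes \<rho>: "M_L_on {..<m} \<rho>" and a: "\<And>i. i < m \<Longrightarrow> a i \<in> {0..1}"
    and h: "h \<in> M_L" and \<eta>: "0 < \<eta>" "\<eta> \<le> 1" and dev: "probe_deviation m \<rho> h a < \<eta>"
  shows "\<exists>s. \<forall>i<m. \<bar>\<rho> i s - of_rat (a i)\<bar> \<le> 2 * \<eta>"
proof -
  have "\<eta> \<in> range h"
    using h \<eta> range_increasing_onto[of 0 1 h] by (simp add: M_L_iff_increasing_onto)
  then obtain s where s: "h s = \<eta>" by auto
  have "\<bar>\<rho> i s - of_rat (a i)\<bar> \<le> 2 * \<eta>" if i: "i < m" for i
  proof -
    have "\<rho> i \<in> M_L" using \<rho> i by (simp add: M_L_on_def)
    moreover have "(of_rat (a i) :: real) \<in> {0..1}" using a[OF i] by (rule of_rat_unit)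
    moreover have "max (of_rat (a i) - phi (of_rat (a i)) (\<rho> i) h) (phi 1 (\<rho> i) h - of_rat (a i)) < \<eta>"
      using max_upto_ge(2)[OF i] dev unfolding probe_deviation_def by (rule le_less_trans)
    ultimately show ?thesis using phi_probe_lower[OF _ h _ _ s] by simp
  qed
  then show ?thesis by blast
qed

lemma rat_approx_unit:
  fixes c :: real
  assumes "c \<in> {0..1}" "0 < \<eta>"
  shows "\<exists>r. r \<in> {0..1} \<and> \<bar>of_rat r - c\<bar> \<le> \<eta>"
proof (cases "c < 1")
  case True
  then obtain r where r: "c < of_rat r" "of_rat r < min 1 (c + \<eta>)"
    using of_rat_dense[of c "min 1 (c + \<eta>)"] assms(2) by auto
  have "0 \<le> c" using assms(1) by simp
  then have "(0 :: real) \<le> of_rat r" using r(1) by linarith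
  moreover have "(of_rat r :: real) < 1" "of_rat r < c + \<eta>" using r(2) by simp_all
  ultimately show ?thesis
    using r(1) by (intro exI[of _ r]) auto
next
  case False
  then show ?thesis using assms by (intro exI[of _ 1]) auto
qed

lemma M_L_on_asg: "set xs \<subseteq> M_L \<Longrightarrow> length xs = n \<Longrightarrow> M_L_on {..<n} (asg xs)"
  by (auto simp: M_L_on_def asg_def)

lemma curve_in_unit:
  assumes "M_L_on V \<rho>" "c \<in> curve V \<rho>"
  shows "c i \<in> {0..1}"
proof -
  obtain t where "c = curve_pt V \<rho> t"
    using assms(2) by (auto simp: curve_def)
  then show ?thesis
    using assms(1) M_L_D(3,4)[of "\<rho> i" t] by (auto simp: curve_pt_def M_L_on_def)
qed

lemma curve_near_if_same_tp:
  fixes xs ys :: "('a::{linear_continuum_topology,order_bot,order_top} \<Rightarrow> real) list"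
  assumes tp: "same_tp xs ys" and xs: "set xs \<subseteq> M_L" and ys: "set ys \<subseteq> M_L"
    and m: "length xs = m" "1 \<le> m" and c: "c \<in> curve {..<m} (asg xs)" and \<eta>: "0 < \<eta>" "\<eta> \<le> 1 / 3"
  shows "\<exists>s. \<forall>i<m. \<bar>asg ys i s - c i\<bar> \<le> 7 * \<eta>"
proof -
  have \<rho>: "M_L_on {..<m} (asg xs)" "M_L_on {..<m} (asg ys)"
    using M_L_on_asg[OF xs m(1)] M_L_on_asg[OF ys] tp m(1) by (simp_all add: same_tp_def)
  obtain s0 where s0: "c = curve_pt {..<m} (asg xs) s0"
    using c by (auto simp: curve_def)
  have c_unit: "c i \<in> {0..1}" for i
    by (rule curve_in_unit[OF \<rho>(1) c])
  obtain a where a: "\<And>i. i < m \<Longrightarrow> a i \<in> {0..1}" "\<And>i. i < m \<Longrightarrow> \<bar>of_rat (a i) - c i\<bar> \<le> \<eta>"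
    using rat_approx_unit[OF c_unit \<eta>(1)] by metis
  have "asg xs 0 \<in> M_L"
    using \<rho>(1) m(2) by (simp add: M_L_on_def)
  then have ne: "(M_L :: ('a \<Rightarrow> real) set) \<noteq> {}" by blast
  have bdd: "bdd_below ((\<lambda>h. probe_deviation m \<sigma> h a) ` M_L)" for \<sigma> :: "nat \<Rightarrow> 'a \<Rightarrow> real"
    by (rule bdd_belowI[of _ 0]) (auto simp: probe_deviation_def max_upto_ge)
  have "\<bar>asg xs i s0 - of_rat (a i)\<bar> \<le> \<eta>" if "i < m" for i
    using a(2)[OF that] s0 that by (simp add: curve_pt_def abs_minus_commute)
  then obtain h where h: "h \<in> M_L" "probe_deviation m (asg xs) h a \<le> \<eta> + \<eta>"
    using probe_deviation_le_if_near[OF m(2) \<rho>(1) a(1)] \<eta> by force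
  have "eval (asg xs) (dist_formula m a) = eval (asg ys) (dist_formula m a)"
    using tp wf_dist_formula[OF a(1)] fv_dist_formula[of m a] m(1) by (simp add: same_tp_def)
  then have "(INF h\<in>M_L. probe_deviation m (asg xs) h a) = (INF h\<in>M_L. probe_deviation m (asg ys) h a)"
    by (simp add: eval_dist_formula)
  moreover have "(INF h\<in>M_L. probe_deviation m (asg xs) h a) \<le> \<eta> + \<eta>"
    using cINF_lower[OF bdd[of "asg xs"] h(1)] h(2) by linarith
  ultimately have "(INF h\<in>M_L. probe_deviation m (asg ys) h a) < 3 * \<eta>"
    using \<eta>(1) by linarith
  then obtain h' where h': "h' \<in> M_L" "probe_deviation m (asg ys) h' a < 3 * \<eta>"
    using cINF_less_iff[OF ne bdd] by blast
  have "\<exists>s. \<forall>i<m. \<bar>asg ys i s - of_rat (a i)\<bar> \<le> 2 * (3 * \<eta>)"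
    by (rule near_if_probe_deviation_less[where a = a, OF \<rho>(2) a(1) h'(1) _ _ h'(2)]) (use \<eta> in auto)
  then obtain s where s: "\<forall>i<m. \<bar>asg ys i s - of_rat (a i)\<bar> \<le> 2 * (3 * \<eta>)" ..
  have "\<bar>asg ys i s - c i\<bar> \<le> 7 * \<eta>" if "i < m" for i
    using s a(2)[OF that] that by fastforce
  then show ?thesis by blast
qed

lemma mem_curve_if_near:
  fixes \<rho> :: "nat \<Rightarrow> 'a::{linear_continuum_topology,order_bot,order_top} \<Rightarrow> real"
  assumes V: "finite V" and \<rho>: "M_L_on V \<rho>"
    and c: "\<And>i. i \<notin> V \<Longrightarrow> c i = 0" "\<And>i. i \<in> V \<Longrightarrow> c i \<in> {0..1}"
    and near: "\<And>\<eta>. 0 < \<eta> \<Longrightarrow> \<exists>s. \<forall>i\<in>V. \<bar>\<rho> i s - c i\<bar> \<le> \<eta>"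
  shows "c \<in> curve V \<rho>"
proof -
  define u where "u = (\<Sum>i\<in>V. c i)"
  have "u \<in> {0..real (card V)}"
    using sum_bounded_above[of V c 1] sum_nonneg[of V c] c(2) by (auto simp: u_def)
  then obtain s0 where s0: "coord_sum V \<rho> s0 = u"
    using range_coord_sum[OF V \<rho>] by (metis rangeE)
  have "\<rho> i s0 = c i" if i: "i \<in> V" for i
  proof -
    have "\<bar>\<rho> i s0 - c i\<bar> \<le> e" if "0 < e" for e
    proof -
      define \<eta> where "\<eta> = e / (real (card V) + 1)"
      have "0 < \<eta>" using that by (simp add: \<eta>_def add_pos_nonneg)
      then obtain s where s: "\<forall>i\<in>V. \<bar>\<rho> i s - c i\<bar> \<le> \<eta>" using near by blast
      have "\<bar>coord_sum V \<rho> s - u\<bar> \<le> (\<Sum>j\<in>V. \<bar>\<rho> j s - c j\<bar>)"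
        unfolding coord_sum_def u_def sum_subtractf[symmetric] by (rule sum_abs)
      also have "\<dots> \<le> real (card V) * \<eta>"
        using sum_bounded_above[of V "\<lambda>j. \<bar>\<rho> j s - c j\<bar>" \<eta>] s by simp
      finally have "\<bar>\<rho> i s0 - c i\<bar> \<le> real (card V) * \<eta> + \<eta>"
        using coord_dist_le_coord_sum_dist[OF V \<rho> i, of s0 s] s0 s i by auto
      also have "\<dots> = (real (card V) + 1) * \<eta>" by (simp add: algebra_simps)
      also have "\<dots> = e" by (simp add: \<eta>_def)
      finally show ?thesis .
    qed
    then show ?thesis using dense_eq0_I[of "\<rho> i s0 - c i"] by simp
  qed
  then have "curve_pt V \<rho> s0 = c"
    using c(1) by (auto simp: curve_pt_def)
  then show ?thesis by (auto simp: curve_def)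
qed

lemma curve_eq_if_same_tp:
  fixes xs ys :: "('a::{linear_continuum_topology,order_bot,order_top} \<Rightarrow> real) list"
  assumes tp: "same_tp xs ys" and xs: "set xs \<subseteq> M_L" and ys: "set ys \<subseteq> M_L" and m: "length xs = m"
  shows "curve {..<m} (asg xs) = curve {..<m} (asg ys)"
proof (cases "m = 0")
  case True
  then show ?thesis by (simp add: curve_def curve_pt_def)
next
  case False
  have subset: "curve {..<m} (asg xs) \<subseteq> curve {..<m} (asg ys)"
    if tp: "same_tp xs ys" and xs: "set xs \<subseteq> M_L" and ys: "set ys \<subseteq> M_L" and m: "length xs = m"
    for xs ys :: "('a \<Rightarrow> real) list"
  proof
    fix c assume c: "c \<in> curve {..<m} (asg xs)"
    have \<rho>: "M_L_on {..<m} (asg xs)" "M_L_on {..<m} (asg ys)"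
      using M_L_on_asg[OF xs m] M_L_on_asg[OF ys] tp m by (simp_all add: same_tp_def)
    have "\<exists>s. \<forall>i\<in>{..<m}. \<bar>asg ys i s - c i\<bar> \<le> \<eta>" if \<eta>: "0 < \<eta>" for \<eta>
    proof -
      have "0 < min (1 / 3) (\<eta> / 7)" "min (1 / 3) (\<eta> / 7) \<le> 1 / 3" "1 \<le> m"
        using \<eta> False by auto
      then obtain s where s: "\<forall>i<m. \<bar>asg ys i s - c i\<bar> \<le> 7 * min (1 / 3) (\<eta> / 7)"
        using curve_near_if_same_tp[OF tp xs ys m _ c] by blast
      moreover have "7 * min (1 / 3) (\<eta> / 7) \<le> \<eta>" by linarith
      ultimately have "\<forall>i\<in>{..<m}. \<bar>asg ys i s - c i\<bar> \<le> \<eta>" by fastforce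
      then show ?thesis ..
    qed
    moreover have "c i = 0" if "i \<notin> {..<m}" for i
      using c that by (auto simp: curve_def curve_pt_def)
    moreover have "c i \<in> {0..1}" for i
      by (rule curve_in_unit[OF \<rho>(1) c])
    ultimately show "c \<in> curve {..<m} (asg ys)"
      by (intro mem_curve_if_near[OF _ \<rho>(2)]) auto
  qed
  have "same_tp ys xs" "length ys = m"
    using tp m by (auto simp: same_tp_def)
  then show ?thesis using subset[OF tp xs ys m] subset[of ys xs] xs ys by blast
qed


section \<open>Pointwise averages\<close>

definition append_pt :: "nat \<Rightarrow> (nat \<Rightarrow> real) \<Rightarrow> (nat \<Rightarrow> real) \<Rightarrow> nat \<Rightarrow> real" where
  "append_pt n a b i = (if i < n then a i else b (i - n))"

lemma curve_pt_asg_append: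
  assumes "length fs = n" "length gs = n"
  shows "curve_pt {..<n + n} (asg (fs @ gs)) t =
         append_pt n (curve_pt {..<n} (asg fs) t) (curve_pt {..<n} (asg gs) t)"
  using assms by (auto simp: curve_pt_def append_pt_def asg_def nth_append fun_eq_iff)

lemma coord_sum_asg: "length xs = n \<Longrightarrow> coord_sum {..<n} (asg xs) t = real n * avg xs t"
proof -
  assume n: "length xs = n"
  have "(\<Sum>f\<leftarrow>xs. f t) = (\<Sum>i = 0..<n. map (\<lambda>f. f t) xs ! i)"
    using n by (subst sum_list_sum_nth) simp
  also have "\<dots> = coord_sum {..<n} (asg xs) t"
    using n by (simp add: coord_sum_def asg_def atLeast0LessThan)
  finally show ?thesis using n by (cases "n = 0") (auto simp: avg_def coord_sum_def)
qed

lemma avg_in_M_L: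
  assumes "1 \<le> n" "length xs = n" "set xs \<subseteq> M_L"
  shows "avg xs \<in> M_L"
proof -
  have \<tau>: "increasing_onto 0 (real n) (coord_sum {..<n} (asg xs))"
    using increasing_onto_coord_sum[OF _ M_L_on_asg[OF assms(3,2)]] by simp
  have "increasing_onto (0 / real n) (real n / real n) (\<lambda>t. coord_sum {..<n} (asg xs) t / real n)"
    by (rule increasing_onto_comp[OF \<tau>]) (use assms(1) in \<open>auto intro!: mono_onI divide_right_mono continuous_intros\<close>)
  moreover have "avg xs = (\<lambda>t. coord_sum {..<n} (asg xs) t / real n)"
    using coord_sum_asg[OF assms(2)] assms(1) by auto
  ultimately show ?thesis using assms(1) by (simp add: M_L_iff_increasing_onto)
qed

text \<open>The point of the curve of fs @ gs lying over the point c of the curve of the two averages: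
  each half is recovered from its coordinate sum, which is n times the corresponding average.\<close>
definition append_param ::
    "nat \<Rightarrow> (nat \<Rightarrow> 'a \<Rightarrow> real) \<Rightarrow> (nat \<Rightarrow> 'a \<Rightarrow> real) \<Rightarrow> (nat \<Rightarrow> real) \<Rightarrow> nat \<Rightarrow> real" where
  "append_param n \<rho> \<sigma> c =
     append_pt n (curve_param {..<n} \<rho> (real n * c 0)) (curve_param {..<n} \<sigma> (real n * c 1))"

lemma curve_append:
  fixes fs gs :: "('a::{linear_continuum_topology,order_bot,order_top} \<Rightarrow> real) list"
  assumes "length fs = n" "length gs = n" "set fs \<subseteq> M_L" "set gs \<subseteq> M_L"
  shows "curve {..<n + n} (asg (fs @ gs)) =
         append_param n (asg fs) (asg gs) ` curve {..<2} (asg [avg fs, avg gs])"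
proof -
  have pt: "curve_pt {..<n} (asg xs) t = curve_param {..<n} (asg xs) (real n * avg xs t)"
    if "length xs = n" "set xs \<subseteq> M_L" for xs :: "('a \<Rightarrow> real) list" and t
    using curve_param_coord_sum[OF _ M_L_on_asg[OF that(2,1)], of t] coord_sum_asg[OF that(1)] by simp
  have "curve_pt {..<n + n} (asg (fs @ gs)) t =
      append_param n (asg fs) (asg gs) (curve_pt {..<2} (asg [avg fs, avg gs]) t)" for t
    using curve_pt_asg_append[OF assms(1,2)] pt[OF assms(1,3)] pt[OF assms(2,4)]
    by (simp add: append_param_def curve_pt_def asg_def)
  then show ?thesis
    unfolding curve_def image_image by simp
qed

lemma curve_param_eq_if_curve_eq:
  fixes \<rho> \<rho>' :: "nat \<Rightarrow> 'a::{linear_continuum_topology,order_bot,order_top} \<Rightarrow> real"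
  assumes "finite V" "M_L_on V \<rho>" "M_L_on V \<rho>'" "curve V \<rho> = curve V \<rho>'" "u \<in> {0..real (card V)}"
  shows "curve_param V \<rho>' u = curve_param V \<rho> u"
proof -
  obtain t where t: "coord_sum V \<rho>' t = u"
    using range_coord_sum[OF assms(1,3)] assms(5) by (metis rangeE)
  then have "curve_param V \<rho>' u = curve_pt V \<rho>' t"
    using curve_param_coord_sum[OF assms(1,3)] by blast
  also have "\<dots> = curve_param V \<rho> u"
    using curve_pt_eq_curve_param[OF assms(1-4)] t by simp
  finally show ?thesis .
qed

lemma curve_append_eq:
  fixes fs gs fs' gs' :: "('a::{linear_continuum_topology,order_bot,order_top} \<Rightarrow> real) list"
  assumes n: "1 \<le> n" "length fs = n" "length gs = n" "length fs' = n" "length gs' = n"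
    and M_L: "set fs \<subseteq> M_L" "set gs \<subseteq> M_L" "set fs' \<subseteq> M_L" "set gs' \<subseteq> M_L"
    and Cf: "curve {..<n} (asg fs') = curve {..<n} (asg fs)"
    and Cg: "curve {..<n} (asg gs') = curve {..<n} (asg gs)"
    and Ca: "curve {..<2} (asg [avg fs', avg gs']) = curve {..<2} (asg [avg fs, avg gs])"
  shows "curve {..<n + n} (asg (fs' @ gs')) = curve {..<n + n} (asg (fs @ gs))"
proof -
  have avg: "avg fs \<in> M_L" "avg gs \<in> M_L"
    using avg_in_M_L[OF n(1)] n M_L by auto
  have "M_L_on {..<2} (asg [avg fs, avg gs])"
    using M_L_on_asg[of "[avg fs, avg gs]" 2] avg by simp
  then have "c 0 \<in> {0..1}" "c 1 \<in> {0..1}" if "c \<in> curve {..<2} (asg [avg fs, avg gs])" for c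
    using curve_in_unit that by blast+
  then have "real n * c 0 \<in> {0..real (card {..<n})}" "real n * c 1 \<in> {0..real (card {..<n})}"
    if "c \<in> curve {..<2} (asg [avg fs, avg gs])" for c
    using that by (auto intro: mult_left_le)
  then show ?thesis
    unfolding curve_append[OF n(4,5) M_L(3,4)] curve_append[OF n(2,3) M_L(1,2)] Ca
    using curve_param_eq_if_curve_eq[OF _ M_L_on_asg[OF M_L(1) n(2)] M_L_on_asg[OF M_L(3) n(4)] Cf[symmetric]]
      curve_param_eq_if_curve_eq[OF _ M_L_on_asg[OF M_L(2) n(3)] M_L_on_asg[OF M_L(4) n(5)] Cg[symmetric]]
    by (intro image_cong) (auto simp: append_param_def)
qed

theorem mainTheorem20:
  fixes fs gs fs' gs' :: "('a::{linear_continuum_topology,order_bot,order_top} \<Rightarrow> real) list"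
    and n :: nat
  assumes "0 < n"
    and "length fs = n" and "length gs = n" and "length fs' = n" and "length gs' = n"
    and "set fs \<subseteq> M_L" and "set gs \<subseteq> M_L" and "set fs' \<subseteq> M_L" and "set gs' \<subseteq> M_L"
    and "same_tp fs' fs" and "same_tp gs' gs"
    and "same_tp [avg fs', avg gs'] [avg fs, avg gs]"
  shows "same_tp (fs' @ gs') (fs @ gs)"
proof -
  have n: "1 \<le> n" using assms(1) by simp
  have avg: "avg fs \<in> M_L" "avg gs \<in> M_L" "avg fs' \<in> M_L" "avg gs' \<in> M_L"
    using avg_in_M_L[OF n] assms(2-9) by auto
  have "curve {..<n + n} (asg (fs' @ gs')) = curve {..<n + n} (asg (fs @ gs))"
  proof (rule curve_append_eq[OF n assms(2-9)])
    show "curve {..<n} (asg fs') = curve {..<n} (asg fs)"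
      by (rule curve_eq_if_same_tp[OF assms(10,8,6,4)])
    show "curve {..<n} (asg gs') = curve {..<n} (asg gs)"
      by (rule curve_eq_if_same_tp[OF assms(11,9,7,5)])
    show "curve {..<2} (asg [avg fs', avg gs']) = curve {..<2} (asg [avg fs, avg gs])"
      by (rule curve_eq_if_same_tp[OF assms(12)]) (use avg in auto)
  qed
  moreover have "M_L_on {..<n + n} (asg (fs' @ gs'))" "M_L_on {..<n + n} (asg (fs @ gs))"
    using M_L_on_asg[of "fs' @ gs'"] M_L_on_asg[of "fs @ gs"] assms(2-9) by simp_all
  moreover have "(M_L :: ('a \<Rightarrow> real) set) \<noteq> {}" using avg by auto
  ultimately have "eval (asg (fs' @ gs')) p = eval (asg (fs @ gs)) p"
    if "wf p" "fv p \<subseteq> {..<n + n}" for p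
    using eval_eq_if_curve_eq[OF that(1) _ M_L_on_subset M_L_on_subset curve_subset, OF _ that(2)] that(2)
    by blast
  then show ?thesis using assms(2-5) by (simp add: same_tp_def)
qed

end
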